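(* Let $(\mathbb{K}_{LC}\langle\langle X\rangle\rangle)^\times$ denote the set of invertible elements of the algebra $(\mathbb{K}_{LC}\langle\langle X\rangle\rangle,\sqcup\!\sqcup)$. The shuffle inverse $$(\mathbb{K}_{LC}\langle\langle X\rangle\rangle)^\times\to(\mathbb{K}_{LC}\langle\langle X\rangle\rangle)^\times,\quad c\mapsto (c,\emptyset)^{-1}\sum_{k\geq 0}(c')^{\sqcup\!\sqcup\, k},\qquad c'=\mathbf{1}-c/(c,\emptyset),$$ is well defined and continuous with respect to the Silva topology.
   Context: $\mathbb{K}\in\{\mathbb{R},\mathbb{C}\}$. $X=\{x_0,\ldots,x_m\}$ is a finite alphabet, $X^\ast$ its set of words (including the empty word $\emptyset$). For $M>0$, $\|c\|_{\ell_\infty,M}=\sup_\eta|(c,\eta)|/(M^{|\eta|}|\eta|!)$ on series $c\colon X^\ast\to\mathbb{K}$, and $\ell_{\infty,M}(X^\ast,\mathbb{K})$ is the Banach space of series with finite norm. $\mathbb{K}_{LC}\langle\langle X\rangle\rangle=\bigcup_{M>0}\ell_{\infty,M}(X^\ast,\mathbb{K})$ with the Silva topology, i.e. the locally convex inductive limit topology of these Banach spaces. $\mathbf{1}$ denotes the series $1\cdot\emptyset$. The shuffle product is the bilinear product determined on words by $(x_i\eta)\sqcup\!\sqcup(x_j\xi)=x_i(\eta\sqcup\!\sqcup(x_j\xi))+x_j((x_i\eta)\sqcup\!\sqcup\xi)$, $\eta\sqcup\!\sqcup\emptyset=\emptyset\sqcup\!\sqcup\eta=\eta$, extended bilinearly;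 its unit is $\mathbf{1}$, and the invertible elements are exactly the series with $(c,\emptyset)\neq0$. $(c')^{\sqcup\!\sqcup k}$ is the $k$-fold shuffle power. *)

theory Defs
  imports "HOL-Analysis.Analysis"
begin

text \<open>Words over a finite alphabet: lists over a type of class finite.
  Series: functions from words to the scalar field.\<close>

definition one_ser :: "'a list \<Rightarrow> 'k::real_normed_field" where
  "one_ser \<eta> = (if \<eta> = [] then 1 else 0)"

definition shuffle :: "('a list \<Rightarrow> 'k::real_normed_field) \<Rightarrow> ('a list \<Rightarrow> 'k) \<Rightarrow> 'a list \<Rightarrow> 'k" where
  "shuffle c d \<eta> =
     (\<Sum>S\<in>Pow {..<length \<eta>}. c (nths \<eta> S) * d (nths \<eta> ({..<length \<eta>} - S)))"

fun shuffle_pow :: "('a list \<Rightarrow> 'k::real_normed_field) \<Rightarrow> nat \<Rightarrow> 'a list \<Rightarrow> 'k" where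
  "shuffle_pow c 0 = one_ser"
| "shuffle_pow c (Suc k) = shuffle c (shuffle_pow c k)"

definition ell_norm :: "real \<Rightarrow> ('a list \<Rightarrow> 'k::real_normed_field) \<Rightarrow> real" where
  "ell_norm M c = (SUP \<eta>. norm (c \<eta>) / (M ^ length \<eta> * fact (length \<eta>)))"

definition ell_inf :: "real \<Rightarrow> ('a list \<Rightarrow> 'k::real_normed_field) set" where
  "ell_inf M = {c. bdd_above (range (\<lambda>\<eta>. norm (c \<eta>) / (M ^ length \<eta> * fact (length \<eta>))))}"

definition LC :: "('a list \<Rightarrow> 'k::real_normed_field) set" where
  "LC = (\<Union>M\<in>{0<..}. ell_inf M)"

definition LC_units :: "('a list \<Rightarrow> 'k::real_normed_field) set" where
  "LC_units = {c \<in> LC. c [] \<noteq> 0}"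

definition absconvex :: "('a list \<Rightarrow> 'k::real_normed_field) set \<Rightarrow> bool" where
  "absconvex U \<longleftrightarrow> (\<forall>x\<in>U. \<forall>y\<in>U. \<forall>a b::'k. norm a + norm b \<le> 1 \<longrightarrow>
        (\<lambda>\<eta>. a * x \<eta> + b * y \<eta>) \<in> U)"

text \<open>Basic zero neighbourhoods of the locally convex inductive limit topology:
  absolutely convex subsets of LC whose trace on each step space ell_inf M
  is a zero neighbourhood of that Banach space.\<close>
definition silva_zero_nbhd :: "('a list \<Rightarrow> 'k::real_normed_field) set \<Rightarrow> bool" where
  "silva_zero_nbhd U \<longleftrightarrow> U \<subseteq> LC \<and> absconvex U \<and>
     (\<forall>M>0. \<exists>\<epsilon>>0. {c \<in> ell_inf M. ell_norm M c < \<epsilon>} \<subseteq> U)"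

definition silva_open :: "('a list \<Rightarrow> 'k::real_normed_field) set \<Rightarrow> bool" where
  "silva_open V \<longleftrightarrow> V \<subseteq> LC \<and>
     (\<forall>c\<in>V. \<exists>U. silva_zero_nbhd U \<and> (\<lambda>u \<eta>. c \<eta> + u \<eta>) ` U \<subseteq> V)"

definition silva_topology :: "('a list \<Rightarrow> 'k::real_normed_field) topology" where
  "silva_topology = topology silva_open"

definition cprime :: "('a list \<Rightarrow> 'k::real_normed_field) \<Rightarrow> 'a list \<Rightarrow> 'k" where
  "cprime c = (\<lambda>\<eta>. one_ser \<eta> - c \<eta> / c [])"

text \<open>Coefficientwise value of the series sum_k (c')^k (finite for each word since
  c' has zero constant term), scaled by the inverse of the constant term.\<close>
definition shuffle_inv :: "('a list \<Rightarrow> 'k::real_normed_field) \<Rightarrow> 'a list \<Rightarrow> 'k" where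
  "shuffle_inv c = (\<lambda>\<eta>. inverse (c []) * (\<Sum>k\<le>length \<eta>. shuffle_pow (cprime c) k \<eta>))"

end

theory Submission
  imports Defs "HOL-Computational_Algebra.Formal_Power_Series"
begin

text \<open>A bound \<open>|(x,\<eta>)| \<le> |\<eta>|! F\<^sub>|\<^sub>\<eta>\<^sub>|\<close> by a real power series \<open>F\<close> behaves well under shuffles:
  if \<open>F\<close> and \<open>G\<close> bound \<open>x\<close> and \<open>y\<close> in this sense, the product \<open>F G\<close> bounds their shuffle, the
  factorials absorbing the binomial coefficients that count shuffles. For a unit \<open>c\<close>, the
  Neumann series of \<open>c'\<close> is therefore bounded by a geometric series, which gives convergence in
  one step space \<open>\<ell>\<^sub>\<infinity>\<^sub>,\<^sub>M\<close> and hence in the Silva topology.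

  For continuity, note that a zero neighbourhood contains a ball in every step space; an envelope of
  their radii yields a weight \<open>V\<close> decaying more slowly than every geometric sequence, with
  \<open>V * V \<le> C V\<close> coefficientwise, whose weighted ball \<open>{x. |(x,\<eta>)| \<le> |\<eta>|! V\<^sub>|\<^sub>\<eta>\<^sub>|}\<close> lies in the
  neighbourhood, while conversely every such ball is a zero neighbourhood. Comparing the Neumann
  partial sums of \<open>c'\<close> and \<open>(c + w)'\<close> term by term then bounds the difference of the inverses
  by \<open>V\<close> as soon as \<open>w\<close> lies in a small multiple of the weighted ball.\<close>

section \<open>Majorant power series\<close>

definition fps_le :: "real fps \<Rightarrow> real fps \<Rightarrow> bool" where
  "fps_le F G \<longleftrightarrow> (\<forall>n. fps_nth F n \<le> fps_nth G n)"

definition fps_nonneg :: "real fps \<Rightarrow> bool" where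
  "fps_nonneg F \<longleftrightarrow> (\<forall>n. 0 \<le> fps_nth F n)"

definition majorizes :: "real fps \<Rightarrow> ('a list \<Rightarrow> 'k::real_normed_field) \<Rightarrow> bool" where
  "majorizes F x \<longleftrightarrow> (\<forall>\<eta>. norm (x \<eta>) \<le> fact (length \<eta>) * fps_nth F (length \<eta>))"

definition fps_geometric :: "real \<Rightarrow> real fps" where
  "fps_geometric B = Abs_fps (\<lambda>n. B ^ n)"

lemma fps_nth_geometric [simp]: "fps_nth (fps_geometric B) n = B ^ n"
  by (simp add: fps_geometric_def)

lemma fps_le_refl [simp]: "fps_le F F"
  by (simp add: fps_le_def)

lemma fps_le_trans [trans]: "fps_le F G \<Longrightarrow> fps_le G H \<Longrightarrow> fps_le F H"
  unfolding fps_le_def by (meson order_trans)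

lemma fps_le_add: "fps_le F F' \<Longrightarrow> fps_le G G' \<Longrightarrow> fps_le (F + G) (F' + G')"
  unfolding fps_le_def by (simp add: add_mono)

lemma fps_le_mult:
  assumes "fps_nonneg F" "fps_nonneg G" "fps_le F F'" "fps_le G G'"
  shows "fps_le (F * G) (F' * G')"
  unfolding fps_le_def fps_mult_nth
proof
  fix n
  show "(\<Sum>i = 0..n. fps_nth F i * fps_nth G (n - i)) \<le> (\<Sum>i = 0..n. fps_nth F' i * fps_nth G' (n - i))"
    using assms unfolding fps_nonneg_def fps_le_def by (intro sum_mono mult_mono) (auto intro: order_trans)
qed

lemma fps_le_const_mult: "0 \<le> a \<Longrightarrow> fps_le F G \<Longrightarrow> fps_le (fps_const a * F) (fps_const a * G)"
  unfolding fps_le_def by (simp add: mult_left_mono)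

lemma fps_le_const_mult_right: "a \<le> b \<Longrightarrow> fps_nonneg F \<Longrightarrow> fps_le (fps_const a * F) (fps_const b * F)"
  unfolding fps_le_def fps_nonneg_def by (simp add: mult_right_mono)

lemma fps_nonneg_fps_le: "fps_nonneg F \<Longrightarrow> fps_le F G \<Longrightarrow> fps_nonneg G"
  unfolding fps_nonneg_def fps_le_def by (meson order_trans)

lemma fps_nonneg_one [simp]: "fps_nonneg 1"
  by (simp add: fps_nonneg_def)

lemma fps_nonneg_mult: "fps_nonneg F \<Longrightarrow> fps_nonneg G \<Longrightarrow> fps_nonneg (F * G)"
  unfolding fps_nonneg_def fps_mult_nth by (auto intro!: sum_nonneg)

lemma fps_nonneg_power: "fps_nonneg F \<Longrightarrow> fps_nonneg (F ^ k)"
  by (induction k) (simp_all add: fps_nonneg_mult)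

lemma fps_nonneg_sum: "(\<And>k. k \<in> K \<Longrightarrow> fps_nonneg (F k)) \<Longrightarrow> fps_nonneg (\<Sum>k\<in>K. F k)"
  unfolding fps_nonneg_def by (simp add: fps_sum_nth sum_nonneg)

lemma fps_power_nth_eq_0:
  fixes A :: "'a::comm_semiring_1 fps"
  assumes "fps_nth A 0 = 0" "n < k"
  shows "fps_nth (A ^ k) n = 0"
  using assms(2)
proof (induction k arbitrary: n)
  case (Suc k)
  have "fps_nth A i * fps_nth (A ^ k) (n - i) = 0" if "i \<le> n" for i
    using Suc that assms(1) by (cases "i = 0") auto
  then show ?case by (simp add: fps_mult_nth)
qed simp

lemma fps_le_const_mult_cube:
  assumes V: "fps_nonneg V" "fps_le (V * V) (fps_const C * V)" "0 \<le> C"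
    and "0 \<le> a" "0 \<le> b" "0 \<le> c"
  shows "fps_le (fps_const a * V * (fps_const b * V) * (fps_const c * V)) (fps_const (a * b * c * C ^ 2) * V)"
proof -
  have "fps_le (V * V * V) (fps_const C * V * V)"
    by (rule fps_le_mult) (use V in \<open>auto intro: fps_nonneg_mult\<close>)
  also have "fps_const C * V * V = fps_const C * (V * V)"
    by (simp add: mult.assoc)
  also have "fps_le \<dots> (fps_const C * (fps_const C * V))"
    using V by (intro fps_le_const_mult) auto
  finally have "fps_le (fps_const (a * b * c) * (V * V * V)) (fps_const (a * b * c) * (fps_const C * (fps_const C * V)))"
    using assms by (intro fps_le_const_mult) auto
  then show ?thesis
    by (simp add: power2_eq_square ac_simps flip: fps_const_mult)
qed

lemma majorizesD: "majorizes F x \<Longrightarrow> norm (x \<eta>) \<le> fact (length \<eta>) * fps_nth F (length \<eta>)"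
  unfolding majorizes_def by blast

lemma majorizes_imp_fps_nonneg: "majorizes F x \<Longrightarrow> fps_nonneg F"
  unfolding fps_nonneg_def
proof
  fix n assume "majorizes F x"
  then have "0 \<le> fact n * fps_nth F n"
    using majorizesD[of F x "replicate n undefined"] by (simp add: order_trans[OF norm_ge_zero])
  then show "0 \<le> fps_nth F n"
    by (metis fact_gt_zero zero_le_mult_iff not_le)
qed

lemma majorizes_mono: "majorizes F x \<Longrightarrow> fps_le F G \<Longrightarrow> majorizes G x"
  unfolding majorizes_def fps_le_def by (meson mult_left_mono order_trans fact_ge_zero)

lemma majorizes_zero: "fps_nonneg F \<Longrightarrow> majorizes F (\<lambda>\<eta>. 0)"
  unfolding majorizes_def fps_nonneg_def by simp

lemma majorizes_one_ser: "majorizes 1 one_ser"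
  unfolding majorizes_def one_ser_def by simp

lemma majorizes_add: "majorizes F x \<Longrightarrow> majorizes G y \<Longrightarrow> majorizes (F + G) (\<lambda>\<eta>. x \<eta> + y \<eta>)"
  unfolding majorizes_def
  by (auto simp: distrib_left intro: order_trans[OF norm_triangle_ineq] add_mono)

lemma majorizes_const_mult:
  "majorizes F x \<Longrightarrow> majorizes (fps_const (norm a) * F) (\<lambda>\<eta>. a * x \<eta>)"
  unfolding majorizes_def by (simp add: norm_mult mult.left_commute mult_left_mono)

lemma majorizes_sum:
  "finite K \<Longrightarrow> (\<And>k. k \<in> K \<Longrightarrow> majorizes (F k) (x k)) \<Longrightarrow>
    majorizes (\<Sum>k\<in>K. F k) (\<lambda>\<eta>. \<Sum>k\<in>K. x k \<eta>)"
proof (induction K rule: finite_induct)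
  case (insert k K)
  then show ?case
    using majorizes_add[of "F k" "x k" "sum F K"] by simp
qed (simp add: majorizes_def)

section \<open>The shuffle product against majorants\<close>

lemma sum_Pow_card:
  fixes f :: "nat \<Rightarrow> 'b::comm_semiring_1"
  assumes "finite A"
  shows "(\<Sum>S\<in>Pow A. f (card S)) = (\<Sum>k\<le>card A. of_nat (card A choose k) * f k)"
proof -
  have "(\<Sum>S\<in>Pow A. f (card S)) = (\<Sum>k\<le>card A. \<Sum>S\<in>{S \<in> Pow A. card S = k}. f (card S))"
    using assms by (intro sum.group[symmetric]) (auto simp: card_mono)
  also have "\<dots> = (\<Sum>k\<le>card A. of_nat (card A choose k) * f k)"
  proof (rule sum.cong[OF refl])
    fix k
    have "(\<Sum>S\<in>{S \<in> Pow A. card S = k}. f (card S)) = of_nat (card {S. S \<subseteq> A \<and> card S = k}) * f k"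
      by simp
    then show "(\<Sum>S\<in>{S \<in> Pow A. card S = k}. f (card S)) = of_nat (card A choose k) * f k"
      by (simp add: n_subsets[OF assms])
  qed
  finally show ?thesis .
qed

lemma length_nths_subset: "S \<subseteq> {..<length xs} \<Longrightarrow> length (nths xs S) = card S"
  by (auto simp: length_nths intro!: arg_cong[where f = card])

lemma majorizes_shuffle:
  fixes x y :: "'a list \<Rightarrow> 'k::real_normed_field"
  assumes x: "majorizes F x" and y: "majorizes G y"
  shows "majorizes (F * G) (shuffle x y)"
  unfolding majorizes_def
proof
  fix \<eta> :: "'a list"
  define n where "n = length \<eta>"
  define I where "I = {..<n}"
  have I: "finite I" "card I = n"
    by (auto simp: I_def)
  have "norm (shuffle x y \<eta>) \<le> (\<Sum>S\<in>Pow I. norm (x (nths \<eta> S)) * norm (y (nths \<eta> (I - S))))"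
    unfolding shuffle_def I_def n_def by (rule order_trans[OF norm_sum]) (simp add: norm_mult)
  also have "\<dots> \<le> (\<Sum>S\<in>Pow I. (fact (card S) * fps_nth F (card S)) *
                   (fact (n - card S) * fps_nth G (n - card S)))"
  proof (rule sum_mono)
    fix S assume S: "S \<in> Pow I"
    then have "card (I - S) = n - card S"
      using I by (simp add: card_Diff_subset finite_subset)
    moreover have "length (nths \<eta> S) = card S" "length (nths \<eta> (I - S)) = card (I - S)"
      using S by (auto simp: I_def n_def intro!: length_nths_subset)
    ultimately show "norm (x (nths \<eta> S)) * norm (y (nths \<eta> (I - S))) \<le>
        (fact (card S) * fps_nth F (card S)) * (fact (n - card S) * fps_nth G (n - card S))"
      using majorizesD[OF x, of "nths \<eta> S"] majorizesD[OF y, of "nths \<eta> (I - S)"]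
        majorizes_imp_fps_nonneg[OF x] majorizes_imp_fps_nonneg[OF y]
      by (intro mult_mono) (auto simp: fps_nonneg_def)
  qed
  also have "\<dots> = (\<Sum>k\<le>n. of_nat (n choose k) *
                   ((fact k * fps_nth F k) * (fact (n - k) * fps_nth G (n - k))))"
    using sum_Pow_card[OF I(1)] I(2) by simp
  also have "\<dots> = (\<Sum>k\<le>n. fact n * (fps_nth F k * fps_nth G (n - k)))"
  proof (rule sum.cong[OF refl])
    fix k assume "k \<in> {..n}"
    then have "(fact k * fact (n - k) * of_nat (n choose k) :: real) = fact n"
      by (metis atMost_iff binomial_fact_lemma of_nat_fact of_nat_mult)
    then show "of_nat (n choose k) * ((fact k * fps_nth F k) * (fact (n - k) * fps_nth G (n - k))) =
        fact n * (fps_nth F k * fps_nth G (n - k))"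
      by (simp add: algebra_simps)
  qed
  also have "\<dots> = fact n * fps_nth (F * G) n"
    by (simp add: fps_mult_nth sum_distrib_left atLeast0AtMost)
  finally show "norm (shuffle x y \<eta>) \<le> fact (length \<eta>) * fps_nth (F * G) (length \<eta>)"
    by (simp add: n_def)
qed

lemma majorizes_shuffle_pow: "majorizes F x \<Longrightarrow> majorizes (F ^ k) (shuffle_pow x k)"
  by (induction k) (auto simp: majorizes_one_ser majorizes_shuffle)

lemma shuffle_pow_eq_0:
  assumes "majorizes A x" "fps_nth A 0 = 0" "length \<eta> < k"
  shows "shuffle_pow x k \<eta> = 0"
  using majorizesD[OF majorizes_shuffle_pow[OF assms(1)], of k \<eta>] fps_power_nth_eq_0[OF assms(2,3)]
  by simp

lemma shuffle_diff_left: "shuffle (\<lambda>\<eta>. x \<eta> - y \<eta>) z = (\<lambda>\<eta>. shuffle x z \<eta> - shuffle y z \<eta>)"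
  unfolding shuffle_def by (simp add: algebra_simps sum_subtractf)

lemma shuffle_diff_right: "shuffle z (\<lambda>\<eta>. x \<eta> - y \<eta>) = (\<lambda>\<eta>. shuffle z x \<eta> - shuffle z y \<eta>)"
  unfolding shuffle_def by (simp add: algebra_simps sum_subtractf)

lemma shuffle_sum_right: "shuffle z (\<lambda>\<eta>. \<Sum>k\<in>K. x k \<eta>) = (\<lambda>\<eta>. \<Sum>k\<in>K. shuffle z (x k) \<eta>)"
  unfolding shuffle_def by (auto simp: sum_distrib_left intro: sum.swap)

section \<open>Neumann partial sums\<close>

definition neumann_sum :: "('a list \<Rightarrow> 'k::real_normed_field) \<Rightarrow> nat \<Rightarrow> 'a list \<Rightarrow> 'k" where
  "neumann_sum x N = (\<lambda>\<eta>. \<Sum>k\<le>N. shuffle_pow x k \<eta>)"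

lemma neumann_sum_0: "neumann_sum x 0 = one_ser"
  by (simp add: neumann_sum_def)

lemma neumann_sum_Suc: "neumann_sum x (Suc N) = (\<lambda>\<eta>. one_ser \<eta> + shuffle x (neumann_sum x N) \<eta>)"
  unfolding neumann_sum_def shuffle_sum_right by (subst sum.atMost_Suc_shift) simp

lemma majorizes_neumann_sum: "majorizes A x \<Longrightarrow> majorizes (\<Sum>k\<le>N. A ^ k) (neumann_sum x N)"
  unfolding neumann_sum_def by (intro majorizes_sum majorizes_shuffle_pow) auto

text \<open>With \<open>A = \<kappa> (M X + M\<^sup>2 X\<^sup>2 + \<dots>)\<close>, the series \<open>\<Sum>\<^sub>k A\<^sup>k = (1 - M X) / (1 - M (1 + \<kappa>) X)\<close> is
  dominated by the geometric series of ratio \<open>M (1 + \<kappa>)\<close>.\<close>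

lemma fps_le_geometric_step:
  fixes \<kappa> M :: real
  assumes "0 \<le> \<kappa>" "0 \<le> M"
  defines "B \<equiv> M * (1 + \<kappa>)"
  shows "fps_le (1 + fps_const \<kappa> * (fps_geometric M - 1) * fps_geometric B) (fps_geometric B)"
  unfolding fps_le_def
proof
  fix n
  show "fps_nth (1 + fps_const \<kappa> * (fps_geometric M - 1) * fps_geometric B) n \<le> fps_nth (fps_geometric B) n"
  proof (cases n)
    case (Suc m)
    have "fps_nth (fps_const \<kappa> * (fps_geometric M - 1) * fps_geometric B) n =
        (\<Sum>i<n. \<kappa> * M ^ Suc i * B ^ (n - Suc i))"
      by (simp add: fps_mult_nth atLeast0AtMost sum.atMost_shift)
    also have "\<dots> = (B - M) * (\<Sum>i<n. B ^ (n - Suc i) * M ^ i)"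
      by (simp add: B_def sum_distrib_left algebra_simps)
    also have "\<dots> = B ^ n - M ^ n"
      using power_diff_sumr2[of M n B] by (metis minus_diff_eq mult_minus_left)
    finally show ?thesis
      using Suc assms by simp
  qed (simp add: fps_mult_nth)
qed

lemma sum_power_atMost_Suc:
  fixes A :: "'a::comm_semiring_1"
  shows "(\<Sum>k\<le>Suc N. A ^ k) = 1 + A * (\<Sum>k\<le>N. A ^ k)"
  by (subst sum.atMost_Suc_shift) (simp add: sum_distrib_left)

lemma fps_le_neumann_geometric:
  fixes \<kappa> M :: real
  assumes "0 \<le> \<kappa>" "0 \<le> M"
  shows "fps_le (\<Sum>k\<le>N. (fps_const \<kappa> * (fps_geometric M - 1)) ^ k) (fps_geometric (M * (1 + \<kappa>)))"
proof (induction N)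
  case 0
  show ?case
    using assms by (simp add: fps_le_def)
next
  case (Suc N)
  let ?A = "fps_const \<kappa> * (fps_geometric M - 1)" and ?G = "fps_geometric (M * (1 + \<kappa>))"
  have A: "fps_nonneg ?A"
    using assms by (simp add: fps_nonneg_def)
  have "fps_le (\<Sum>k\<le>Suc N. ?A ^ k) (1 + ?A * ?G)"
    unfolding sum_power_atMost_Suc
    using Suc A by (intro fps_le_add fps_le_refl fps_le_mult[OF A]) (auto intro: fps_nonneg_sum fps_nonneg_power)
  also have "fps_le (1 + ?A * ?G) ?G"
    using fps_le_geometric_step[OF assms] by (simp add: mult.assoc)
  finally show ?case .
qed

text \<open>With \<open>X\<^sub>N\<close>, \<open>Y\<^sub>N\<close> the partial sums for \<open>x\<close>, \<open>y\<close>, bilinearity gives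
  \<open>X\<^sub>N\<^sub>+\<^sub>1 - Y\<^sub>N\<^sub>+\<^sub>1 = shuffle (x - y) X\<^sub>N + shuffle y (X\<^sub>N - Y\<^sub>N)\<close>. So the difference stays below
  \<open>(\<Sum>k\<le>N. A\<^sup>k) \<Gamma> Z\<close> as long as \<open>Z\<close> majorizes \<open>X\<^sub>N\<close>, and \<open>G + G \<Gamma> Z \<le> Z\<close> propagates that bound.\<close>

lemma majorizes_neumann_sum_diff:
  fixes x y :: "'a list \<Rightarrow> 'k::real_normed_field"
  assumes y: "majorizes A y" and xy: "majorizes \<Gamma> (\<lambda>\<eta>. x \<eta> - y \<eta>)"
    and G: "\<And>N. fps_le (\<Sum>k\<le>N. A ^ k) G"
    and Z: "fps_le 1 Z" "fps_le (G + G * \<Gamma> * Z) Z"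
  shows "majorizes (G * \<Gamma> * Z) (\<lambda>\<eta>. neumann_sum x N \<eta> - neumann_sum y N \<eta>)"
proof -
  define H where "H N = (\<Sum>k\<le>N. A ^ k)" for N
  have nonneg: "fps_nonneg A" "fps_nonneg \<Gamma>" "fps_nonneg Z" "fps_nonneg (H N)" for N
    using majorizes_imp_fps_nonneg[OF y] majorizes_imp_fps_nonneg[OF xy] fps_nonneg_fps_le[OF _ Z(1)]
    by (auto simp: H_def intro: fps_nonneg_sum fps_nonneg_power)
  have HG: "fps_le (H N * \<Gamma> * Z) (G * \<Gamma> * Z)" for N
    using nonneg G[of N, folded H_def] by (intro fps_le_mult fps_nonneg_mult fps_le_refl) auto
  have "majorizes (H N * \<Gamma> * Z) (\<lambda>\<eta>. neumann_sum x N \<eta> - neumann_sum y N \<eta>) \<and>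
        majorizes Z (neumann_sum x N)"
  proof (induction N)
    case 0
    show ?case
      using nonneg majorizes_mono[OF majorizes_one_ser Z(1)]
      by (simp add: neumann_sum_0 majorizes_zero fps_nonneg_mult)
  next
    case (Suc N)
    let ?X = "neumann_sum x N" and ?Y = "neumann_sum y N"
    have "(\<lambda>\<eta>. neumann_sum x (Suc N) \<eta> - neumann_sum y (Suc N) \<eta>) =
        (\<lambda>\<eta>. shuffle (\<lambda>\<eta>. x \<eta> - y \<eta>) ?X \<eta> + shuffle y (\<lambda>\<eta>. ?X \<eta> - ?Y \<eta>) \<eta>)"
      by (simp add: neumann_sum_Suc shuffle_diff_left shuffle_diff_right)
    moreover have "\<Gamma> * Z + A * (H N * \<Gamma> * Z) = H (Suc N) * \<Gamma> * Z"
      unfolding H_def sum_power_atMost_Suc by (simp add: algebra_simps)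
    moreover have "majorizes (\<Gamma> * Z) (shuffle (\<lambda>\<eta>. x \<eta> - y \<eta>) ?X)"
      using Suc by (blast intro: majorizes_shuffle[OF xy])
    moreover have "majorizes (A * (H N * \<Gamma> * Z)) (shuffle y (\<lambda>\<eta>. ?X \<eta> - ?Y \<eta>))"
      using Suc by (blast intro: majorizes_shuffle[OF y])
    ultimately have diff: "majorizes (H (Suc N) * \<Gamma> * Z)
        (\<lambda>\<eta>. neumann_sum x (Suc N) \<eta> - neumann_sum y (Suc N) \<eta>)"
      using majorizes_add by fastforce
    have "majorizes (H (Suc N) + H (Suc N) * \<Gamma> * Z) (neumann_sum x (Suc N))"
      using majorizes_add[OF majorizes_neumann_sum[OF y, of "Suc N", folded H_def] diff] by simp
    moreover have "fps_le (H (Suc N) + H (Suc N) * \<Gamma> * Z) Z"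
      using HG G[of "Suc N", folded H_def] by (blast intro: fps_le_trans[OF fps_le_add Z(2)])
    ultimately show ?case
      using diff majorizes_mono by blast
  qed
  then show ?thesis
    using HG majorizes_mono by blast
qed

lemma majorizes_neumann_sum_diff_weight:
  fixes x y :: "'a list \<Rightarrow> 'k::real_normed_field"
  assumes y: "majorizes A y" "\<And>N. fps_le (\<Sum>k\<le>N. A ^ k) (fps_const \<rho> * V)"
    and xy: "majorizes (fps_const \<gamma> * V) (\<lambda>\<eta>. x \<eta> - y \<eta>)" "0 \<le> \<gamma>"
    and V: "fps_nonneg V" "fps_le (V * V) (fps_const C * V)" "0 \<le> C" "1 \<le> \<rho> * fps_nth V 0" "0 < \<rho>"
    and small: "2 * \<rho> * \<gamma> * C ^ 2 \<le> 1"
  shows "majorizes (fps_const (2 * \<rho> ^ 2 * \<gamma> * C ^ 2) * V) (\<lambda>\<eta>. neumann_sum x N \<eta> - neumann_sum y N \<eta>)"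
proof -
  define Z where "Z = fps_const (2 * \<rho>) * V"
  have "fps_le 1 Z"
    using V(1,4) \<open>0 < \<rho>\<close> by (auto simp: fps_le_def fps_nonneg_def Z_def)
  have prod: "fps_le (fps_const \<rho> * V * (fps_const \<gamma> * V) * Z) (fps_const (2 * \<rho> ^ 2 * \<gamma> * C ^ 2) * V)"
    using fps_le_const_mult_cube[OF V(1-3), of \<rho> \<gamma> "2 * \<rho>"] \<open>0 < \<rho>\<close> xy(2)
    by (simp add: Z_def power2_eq_square ac_simps)
  have "fps_le (fps_const \<rho> * V + fps_const \<rho> * V * (fps_const \<gamma> * V) * Z)
      (fps_const \<rho> * V + fps_const (2 * \<rho> ^ 2 * \<gamma> * C ^ 2) * V)"
    using prod by (intro fps_le_add fps_le_refl)
  also have "\<dots> = fps_const (\<rho> + \<rho> * (2 * \<rho> * \<gamma> * C ^ 2)) * V"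
    by (simp add: fps_eq_iff algebra_simps power2_eq_square)
  also have "fps_le \<dots> Z"
    unfolding Z_def using small \<open>0 < \<rho>\<close> V(1) by (intro fps_le_const_mult_right) auto
  finally have "fps_le (fps_const \<rho> * V + fps_const \<rho> * V * (fps_const \<gamma> * V) * Z) Z" .
  with majorizes_neumann_sum_diff[OF y(1) xy(1) y(2) \<open>fps_le 1 Z\<close>] prod show ?thesis
    using majorizes_mono by blast
qed

section \<open>The step spaces\<close>

lemma majorizes_geometric_imp_nonneg:
  assumes "majorizes (fps_const K * fps_geometric M) x"
  shows "0 \<le> K"
  using majorizesD[OF assms, of "[]"] by (simp add: order_trans[OF norm_ge_zero])

lemma majorizes_geometric_mono:
  assumes "majorizes (fps_const K * fps_geometric M) x" "0 \<le> M" "M \<le> M'"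
  shows "majorizes (fps_const K * fps_geometric M') x"
proof (rule majorizes_mono[OF assms(1)])
  show "fps_le (fps_const K * fps_geometric M) (fps_const K * fps_geometric M')"
    using assms majorizes_geometric_imp_nonneg[OF assms(1)] by (simp add: fps_le_def mult_left_mono power_mono)
qed

lemma ell_inf_iff_majorizes:
  assumes "0 < M"
  shows "c \<in> ell_inf M \<longleftrightarrow> (\<exists>K. majorizes (fps_const K * fps_geometric M) c)"
proof -
  have "norm (c \<eta>) / (M ^ length \<eta> * fact (length \<eta>)) \<le> K \<longleftrightarrow>
      norm (c \<eta>) \<le> fact (length \<eta>) * (K * M ^ length \<eta>)" for K \<eta>
    using assms by (simp add: pos_divide_le_eq algebra_simps)
  then show ?thesis
    unfolding ell_inf_def bdd_above_def majorizes_def by simp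
qed

lemma LC_iff_majorizes: "c \<in> LC \<longleftrightarrow> (\<exists>M>0. \<exists>K. majorizes (fps_const K * fps_geometric M) c)"
  unfolding LC_def using ell_inf_iff_majorizes by auto

lemma majorizes_ell_norm:
  assumes "0 < M" "c \<in> ell_inf M"
  shows "majorizes (fps_const (ell_norm M c) * fps_geometric M) c"
  unfolding majorizes_def
proof
  fix \<eta> :: "'a list"
  have "norm (c \<eta>) / (M ^ length \<eta> * fact (length \<eta>)) \<le> ell_norm M c"
    using assms(2) unfolding ell_norm_def ell_inf_def by (auto intro: cSUP_upper)
  then show "norm (c \<eta>) \<le> fact (length \<eta>) * fps_nth (fps_const (ell_norm M c) * fps_geometric M) (length \<eta>)"
    using assms(1) by (simp add: pos_divide_le_eq algebra_simps)
qed

lemma ell_norm_le: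
  assumes "0 < M" "majorizes (fps_const b * fps_geometric M) c"
  shows "ell_norm M c \<le> b"
  unfolding ell_norm_def
proof (rule cSUP_least)
  fix \<eta> :: "'a list"
  show "norm (c \<eta>) / (M ^ length \<eta> * fact (length \<eta>)) \<le> b"
    using majorizesD[OF assms(2), of \<eta>] assms(1) by (simp add: pos_divide_le_eq algebra_simps)
qed simp

lemma mem_if_ell_ball_subset:
  assumes "{c \<in> ell_inf M. ell_norm M c < \<epsilon>} \<subseteq> U" "0 < M" "b < \<epsilon>"
    and "majorizes (fps_const b * fps_geometric M) u"
  shows "u \<in> U"
  using assms ell_norm_le[OF assms(2,4)] ell_inf_iff_majorizes[OF assms(2)] by fastforce

lemma LC_linear:
  assumes "x \<in> LC" "y \<in> LC"
  shows "(\<lambda>\<eta>. a * x \<eta> + b * y \<eta>) \<in> LC"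
proof -
  obtain M1 K1 M2 K2 where M: "0 < M1" "0 < M2"
    and "majorizes (fps_const K1 * fps_geometric M1) x" "majorizes (fps_const K2 * fps_geometric M2) y"
    using assms unfolding LC_iff_majorizes by blast
  then have "majorizes (fps_const K1 * fps_geometric (max M1 M2)) x"
    "majorizes (fps_const K2 * fps_geometric (max M1 M2)) y"
    by (auto intro: majorizes_geometric_mono)
  then have "majorizes (fps_const (norm a) * (fps_const K1 * fps_geometric (max M1 M2)) +
      fps_const (norm b) * (fps_const K2 * fps_geometric (max M1 M2))) (\<lambda>\<eta>. a * x \<eta> + b * y \<eta>)"
    by (intro majorizes_add majorizes_const_mult)
  also have "fps_const (norm a) * (fps_const K1 * fps_geometric (max M1 M2)) +
      fps_const (norm b) * (fps_const K2 * fps_geometric (max M1 M2)) =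
      fps_const (norm a * K1 + norm b * K2) * fps_geometric (max M1 M2)"
    by (simp add: fps_eq_iff algebra_simps)
  finally show ?thesis
    unfolding LC_iff_majorizes using M by (meson max.strict_coboundedI1)
qed

lemma LC_add: "x \<in> LC \<Longrightarrow> y \<in> LC \<Longrightarrow> (\<lambda>\<eta>. x \<eta> + y \<eta>) \<in> LC"
  using LC_linear[of x y 1 1] by simp

lemma LC_diff: "x \<in> LC \<Longrightarrow> y \<in> LC \<Longrightarrow> (\<lambda>\<eta>. x \<eta> - y \<eta>) \<in> LC"
  using LC_linear[of x y 1 "-1"] by simp

section \<open>The Silva topology\<close>

lemma silva_zero_nbhd_Int:
  assumes "silva_zero_nbhd U" "silva_zero_nbhd V"
  shows "silva_zero_nbhd (U \<inter> V)"
  unfolding silva_zero_nbhd_def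
proof (intro conjI allI impI)
  show "U \<inter> V \<subseteq> LC" "absconvex (U \<inter> V)"
    using assms unfolding silva_zero_nbhd_def absconvex_def by blast+
  fix M :: real assume "0 < M"
  then obtain \<epsilon>1 \<epsilon>2 where "0 < \<epsilon>1" "{c \<in> ell_inf M. ell_norm M c < \<epsilon>1} \<subseteq> U"
    "0 < \<epsilon>2" "{c \<in> ell_inf M. ell_norm M c < \<epsilon>2} \<subseteq> V"
    using assms unfolding silva_zero_nbhd_def by meson
  then show "\<exists>\<epsilon>>0. {c \<in> ell_inf M. ell_norm M c < \<epsilon>} \<subseteq> U \<inter> V"
    by (intro exI[of _ "min \<epsilon>1 \<epsilon>2"]) auto
qed

lemma absconvex_LC: "absconvex LC"
  unfolding absconvex_def using LC_linear by blast

lemma silva_zero_nbhd_LC: "silva_zero_nbhd LC"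
  unfolding silva_zero_nbhd_def using absconvex_LC by (auto simp: LC_def intro!: exI[of _ 1])

lemma istopology_silva_open: "istopology silva_open"
  unfolding istopology_def
proof (intro conjI allI impI)
  fix S T :: "('a list \<Rightarrow> 'k::real_normed_field) set"
  assume S: "silva_open S" and T: "silva_open T"
  show "silva_open (S \<inter> T)"
    unfolding silva_open_def
  proof (intro conjI ballI)
    show "S \<inter> T \<subseteq> LC"
      using S unfolding silva_open_def by blast
    fix c assume "c \<in> S \<inter> T"
    then obtain U V where "silva_zero_nbhd U" "(\<lambda>u \<eta>. c \<eta> + u \<eta>) ` U \<subseteq> S"
      "silva_zero_nbhd V" "(\<lambda>u \<eta>. c \<eta> + u \<eta>) ` V \<subseteq> T"
      using S T unfolding silva_open_def by blast
    then show "\<exists>U. silva_zero_nbhd U \<and> (\<lambda>u \<eta>. c \<eta> + u \<eta>) ` U \<subseteq> S \<inter> T"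
      by (intro exI[of _ "U \<inter> V"]) (auto intro: silva_zero_nbhd_Int)
  qed
next
  fix K :: "('a list \<Rightarrow> 'k::real_normed_field) set set"
  assume K: "\<forall>S\<in>K. silva_open S"
  show "silva_open (\<Union>K)"
    unfolding silva_open_def
  proof (intro conjI ballI)
    show "\<Union>K \<subseteq> LC"
      using K unfolding silva_open_def by blast
    fix c assume "c \<in> \<Union>K"
    then obtain S where "S \<in> K" "c \<in> S"
      by blast
    then obtain U where "silva_zero_nbhd U" "(\<lambda>u \<eta>. c \<eta> + u \<eta>) ` U \<subseteq> S"
      using K unfolding silva_open_def by blast
    then show "\<exists>U. silva_zero_nbhd U \<and> (\<lambda>u \<eta>. c \<eta> + u \<eta>) ` U \<subseteq> \<Union>K"
      using \<open>S \<in> K\<close> by blast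
  qed
qed

lemma openin_silva_topology: "openin silva_topology = silva_open"
  unfolding silva_topology_def by (rule topology_inverse'[OF istopology_silva_open])

lemma topspace_silva_topology: "topspace silva_topology = LC"
proof -
  have "silva_open LC"
    unfolding silva_open_def using silva_zero_nbhd_LC LC_add by blast
  then show ?thesis
    unfolding topspace_def openin_silva_topology using silva_open_def by blast
qed

lemma limitin_silva_topologyI:
  assumes "l \<in> LC" "0 < M"
    and "\<And>\<epsilon>. 0 < \<epsilon> \<Longrightarrow>
      eventually (\<lambda>n. majorizes (fps_const \<epsilon> * fps_geometric M) (\<lambda>\<eta>. f n \<eta> - l \<eta>)) sequentially"
  shows "limitin silva_topology f l sequentially"
  unfolding limitin_def topspace_silva_topology openin_silva_topology
proof (intro conjI allI impI)
  fix V assume "silva_open V \<and> l \<in> V"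
  then obtain U where U: "silva_zero_nbhd U" "(\<lambda>u \<eta>. l \<eta> + u \<eta>) ` U \<subseteq> V"
    unfolding silva_open_def by blast
  then obtain \<epsilon> where "0 < \<epsilon>" and ball: "{c \<in> ell_inf M. ell_norm M c < \<epsilon>} \<subseteq> U"
    using assms(2) unfolding silva_zero_nbhd_def by blast
  have "f n \<in> V" if "majorizes (fps_const (\<epsilon> / 2) * fps_geometric M) (\<lambda>\<eta>. f n \<eta> - l \<eta>)" for n
  proof -
    have "(\<lambda>\<eta>. f n \<eta> - l \<eta>) \<in> U"
      using mem_if_ell_ball_subset[OF ball assms(2) _ that] \<open>0 < \<epsilon>\<close> by simp
    then have "(\<lambda>\<eta>. l \<eta> + (f n \<eta> - l \<eta>)) \<in> V"
      using U(2) by blast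
    then show ?thesis
      by simp
  qed
  then show "eventually (\<lambda>n. f n \<in> V) sequentially"
    using assms(3)[of "\<epsilon> / 2"] \<open>0 < \<epsilon>\<close> by (auto elim: eventually_mono)
qed (use assms in simp)

lemma continuous_map_silva_topologyI:
  assumes "S \<subseteq> LC" "T \<subseteq> LC" "f ` S \<subseteq> T"
    and local: "\<And>c U. c \<in> S \<Longrightarrow> silva_zero_nbhd U \<Longrightarrow> \<exists>W. silva_zero_nbhd W \<and>
      (\<forall>w\<in>W. (\<lambda>\<eta>. c \<eta> + w \<eta>) \<in> S \<and> (\<lambda>\<eta>. f (\<lambda>\<eta>. c \<eta> + w \<eta>) \<eta> - f c \<eta>) \<in> U)"
  shows "continuous_map (subtopology silva_topology S) (subtopology silva_topology T) f"
proof -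
  have "openin (subtopology silva_topology S) {c \<in> S. f c \<in> V}"
    if open_V: "openin (subtopology silva_topology T) V" for V
  proof -
    obtain Q where Q: "silva_open Q" and V: "V = Q \<inter> T"
      using open_V unfolding openin_subtopology openin_silva_topology by blast
    have "silva_open {c \<in> S. f c \<in> Q}"
      unfolding silva_open_def
    proof (intro conjI ballI)
      fix c assume c: "c \<in> {c \<in> S. f c \<in> Q}"
      then obtain U where U: "silva_zero_nbhd U" "(\<lambda>u \<eta>. f c \<eta> + u \<eta>) ` U \<subseteq> Q"
        using Q unfolding silva_open_def by blast
      obtain W where "silva_zero_nbhd W"
        and W: "\<And>w. w \<in> W \<Longrightarrow> (\<lambda>\<eta>. c \<eta> + w \<eta>) \<in> S \<and> (\<lambda>\<eta>. f (\<lambda>\<eta>. c \<eta> + w \<eta>) \<eta> - f c \<eta>) \<in> U"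
        using local[OF _ U(1)] c by blast
      moreover have "f (\<lambda>\<eta>. c \<eta> + w \<eta>) \<in> Q" if "w \<in> W" for w
      proof -
        have "(\<lambda>\<eta>. f c \<eta> + (f (\<lambda>\<eta>. c \<eta> + w \<eta>) \<eta> - f c \<eta>)) \<in> Q"
          using U(2) W[OF that] by blast
        then show ?thesis
          by simp
      qed
      ultimately show "\<exists>W. silva_zero_nbhd W \<and> (\<lambda>u \<eta>. c \<eta> + u \<eta>) ` W \<subseteq> {c \<in> S. f c \<in> Q}"
        by blast
    qed (use assms(1) in auto)
    moreover have "{c \<in> S. f c \<in> V} = {c \<in> S. f c \<in> Q} \<inter> S"
      using assms(3) by (auto simp: V)
    ultimately show ?thesis
      unfolding openin_subtopology openin_silva_topology by blast
  qed
  moreover have "topspace (subtopology silva_topology S) = S"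
    using assms(1) by (simp add: topspace_silva_topology Int_absorb1)
  moreover have "f \<in> S \<rightarrow> topspace (subtopology silva_topology T)"
    using assms(2,3) by (auto simp: topspace_silva_topology)
  ultimately show ?thesis
    unfolding continuous_map_def by simp
qed

section \<open>Weighted balls\<close>

definition dominates_geometric :: "real fps \<Rightarrow> bool" where
  "dominates_geometric V \<longleftrightarrow> (\<forall>L>0. \<exists>r>0. \<forall>n. r * L ^ n \<le> fps_nth V n)"

definition weighted_ball :: "real fps \<Rightarrow> ('a list \<Rightarrow> 'k::real_normed_field) set" where
  "weighted_ball V = {x \<in> LC. majorizes V x}"

lemma dominates_geometric_pos:
  assumes "dominates_geometric V"
  shows "0 < fps_nth V n"
proof -
  obtain r where "0 < r" "\<And>n. r * 1 ^ n \<le> fps_nth V n"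
    using assms unfolding dominates_geometric_def by (meson zero_less_one)
  then show ?thesis
    by (metis less_le_trans mult.right_neutral power_one)
qed

lemma dominates_geometric_const_mult:
  assumes "dominates_geometric V" "0 < \<epsilon>"
  shows "dominates_geometric (fps_const \<epsilon> * V)"
  unfolding dominates_geometric_def
proof (intro allI impI)
  fix L :: real assume "0 < L"
  then obtain r where "0 < r" "\<And>n. r * L ^ n \<le> fps_nth V n"
    using assms(1) unfolding dominates_geometric_def by blast
  then show "\<exists>r>0. \<forall>n. r * L ^ n \<le> fps_nth (fps_const \<epsilon> * V) n"
    using assms(2) by (intro exI[of _ "\<epsilon> * r"]) (simp add: mult.assoc)
qed

lemma dominates_geometricI:
  assumes pos: "\<And>n. 0 < fps_nth V n"
    and eventually: "\<And>L. 0 < L \<Longrightarrow> \<exists>r>0. \<exists>N. \<forall>n\<ge>N. r * L ^ n \<le> fps_nth V n"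
  shows "dominates_geometric V"
  unfolding dominates_geometric_def
proof (intro allI impI)
  fix L :: real assume "0 < L"
  then obtain r N where r: "0 < r" "\<And>n. N \<le> n \<Longrightarrow> r * L ^ n \<le> fps_nth V n"
    using eventually by blast
  define r' where "r' = Min (insert r ((\<lambda>n. fps_nth V n / L ^ n) ` {..<N}))"
  have "0 < r'"
    unfolding r'_def using r(1) pos \<open>0 < L\<close> by (subst Min_gr_iff) auto
  moreover have "r' * L ^ n \<le> fps_nth V n" for n
  proof (cases "N \<le> n")
    case True
    have "r' \<le> r"
      unfolding r'_def by (rule Min_le) auto
    then show ?thesis
      using r(2)[OF True] \<open>0 < L\<close> by (meson mult_right_mono order_trans zero_le_power less_imp_le)
  next
    case False
    then have "r' \<le> fps_nth V n / L ^ n"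
      unfolding r'_def by (intro Min_le) auto
    then show ?thesis
      using \<open>0 < L\<close> by (simp add: le_divide_eq)
  qed
  ultimately show "\<exists>r>0. \<forall>n. r * L ^ n \<le> fps_nth V n"
    by blast
qed

lemma silva_zero_nbhd_weighted_ball:
  fixes V :: "real fps"
  assumes V: "dominates_geometric V"
  shows "silva_zero_nbhd (weighted_ball V :: ('a list \<Rightarrow> 'k::real_normed_field) set)"
  unfolding silva_zero_nbhd_def
proof (intro conjI allI impI)
  have "fps_nonneg V"
    using dominates_geometric_pos[OF V] by (simp add: fps_nonneg_def less_imp_le)
  show "absconvex (weighted_ball V :: ('a list \<Rightarrow> 'k) set)"
    unfolding absconvex_def
  proof (intro ballI allI impI)
    fix x y :: "'a list \<Rightarrow> 'k" and a b :: 'k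
    assume "x \<in> weighted_ball V" "y \<in> weighted_ball V" and ab: "norm a + norm b \<le> 1"
    then have "x \<in> LC" "y \<in> LC" "majorizes V x" "majorizes V y"
      by (auto simp: weighted_ball_def)
    then have "majorizes (fps_const (norm a) * V + fps_const (norm b) * V) (\<lambda>\<eta>. a * x \<eta> + b * y \<eta>)"
      by (intro majorizes_add majorizes_const_mult)
    moreover have "fps_le (fps_const (norm a) * V + fps_const (norm b) * V) (fps_const 1 * V)"
      using fps_le_const_mult_right[OF ab \<open>fps_nonneg V\<close>] by (metis distrib_right fps_const_add)
    ultimately show "(\<lambda>\<eta>. a * x \<eta> + b * y \<eta>) \<in> weighted_ball V"
      using LC_linear[OF \<open>x \<in> LC\<close> \<open>y \<in> LC\<close>] majorizes_mono by (fastforce simp: weighted_ball_def)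
  qed
next
  fix M :: real assume "0 < M"
  then obtain r where "0 < r" and r: "\<And>n. r * M ^ n \<le> fps_nth V n"
    using V unfolding dominates_geometric_def by blast
  have "c \<in> weighted_ball V" if "c \<in> ell_inf M" "ell_norm M c < r" for c :: "'a list \<Rightarrow> 'k"
  proof -
    have "fps_le (fps_const (ell_norm M c) * fps_geometric M) V"
      using r \<open>0 < M\<close> that(2) unfolding fps_le_def
      by (auto intro: order_trans[OF mult_right_mono[OF less_imp_le]])
    then show ?thesis
      using majorizes_ell_norm[OF \<open>0 < M\<close> that(1)] that(1) \<open>0 < M\<close> majorizes_mono
      by (auto simp: weighted_ball_def LC_def)
  qed
  then show "\<exists>\<epsilon>>0. {c \<in> ell_inf M. ell_norm M c < \<epsilon>} \<subseteq> (weighted_ball V :: ('a list \<Rightarrow> 'k) set)"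
    using \<open>0 < r\<close> by blast
qed (auto simp: weighted_ball_def)

text \<open>\<open>x = (\<Sum>j<L. 2^(-j-1) (2^(j+1) x\<^sub>j)) + 2^(-L) (2^L x\<^sub>\<ge>\<^sub>L)\<close> is a combination with
  coefficients of total modulus \<open>1\<close>.\<close>

lemma absconvex_mem_if_graded_pieces:
  fixes x :: "'a list \<Rightarrow> 'k::real_normed_field"
  assumes U: "absconvex U"
    and pieces: "\<And>j. j < L \<Longrightarrow> (\<lambda>\<eta>. 2 ^ Suc j * (if length \<eta> = j then x \<eta> else 0)) \<in> U"
    and tail: "(\<lambda>\<eta>. 2 ^ L * (if L \<le> length \<eta> then x \<eta> else 0)) \<in> U"
  shows "x \<in> U"
proof -
  have conv: "(\<lambda>\<eta>. a * u \<eta> + b * v \<eta>) \<in> U" if "u \<in> U" "v \<in> U" "norm a + norm b \<le> 1" for u v a b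
    using U that unfolding absconvex_def by blast
  define y where "y i = (\<lambda>\<eta>. 2 ^ i * (if i \<le> length \<eta> then x \<eta> else 0))" for i
  have "y (L - i) \<in> U" if "i \<le> L" for i
    using that
  proof (induction i)
    case 0
    then show ?case
      using tail by (simp add: y_def)
  next
    case (Suc i)
    define j where "j = L - Suc i"
    have "L - i = Suc j" "j < L"
      using Suc.prems by (auto simp: j_def)
    then have "(\<lambda>\<eta>. 1 / 2 * (2 ^ Suc j * (if length \<eta> = j then x \<eta> else 0)) + 1 / 2 * y (Suc j) \<eta>) \<in> U"
      using Suc by (intro conv pieces) (auto simp: norm_divide)
    moreover have "(\<lambda>\<eta>. 1 / 2 * (2 ^ Suc j * (if length \<eta> = j then x \<eta> else 0)) + 1 / 2 * y (Suc j) \<eta>) = y j"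
      by (auto simp: y_def)
    ultimately show ?case
      by (simp add: j_def)
  qed
  moreover have "y 0 = x"
    by (simp add: y_def)
  ultimately show ?thesis
    by (metis diff_self_eq_0 order_refl)
qed

lemma sum_inverse_squares_le: "(\<Sum>i\<le>n. 1 / (real i + 1) ^ 2) \<le> 2 - 1 / (real n + 1)"
proof (induction n)
  case (Suc n)
  have "1 / (real n + 2) ^ 2 \<le> 1 / ((real n + 1) * (real n + 2))"
    by (intro divide_left_mono) (auto simp: power2_eq_square)
  also have "\<dots> = 1 / (real n + 1) - 1 / (real n + 2)"
    by (simp add: field_simps)
  finally show ?case
    using Suc by (simp add: add.commute)
qed simp

lemma sum_inverse_square_products_le:
  "(\<Sum>j\<le>n. 1 / ((real j + 1) ^ 2 * (real (n - j) + 1) ^ 2)) \<le> 8 / (real n + 1) ^ 2"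
proof -
  have "1 / ((real j + 1) ^ 2 * (real (n - j) + 1) ^ 2)
      \<le> (2 / (real j + 1) ^ 2 + 2 / (real (n - j) + 1) ^ 2) / (real n + 1) ^ 2" if "j \<le> n" for j
  proof -
    define a b where "a = real j + 1" and "b = real (n - j) + 1"
    have ab: "1 \<le> a" "1 \<le> b" "a + b = real n + 2"
      using that by (auto simp: a_def b_def)
    have "(real n + 1) ^ 2 \<le> (a + b) ^ 2"
      using ab by (intro power_mono) auto
    also have "\<dots> \<le> 2 * a ^ 2 + 2 * b ^ 2"
      using sum_squares_ge_zero[of "a - b" 0] by (simp add: power2_eq_square algebra_simps)
    finally have "(real n + 1) ^ 2 \<le> 2 * a ^ 2 + 2 * b ^ 2" .
    then have "1 / (a ^ 2 * b ^ 2) \<le> (2 / a ^ 2 + 2 / b ^ 2) / (real n + 1) ^ 2"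
      using ab by (simp add: field_simps)
    then show ?thesis
      by (simp add: a_def b_def)
  qed
  then have "(\<Sum>j\<le>n. 1 / ((real j + 1) ^ 2 * (real (n - j) + 1) ^ 2))
      \<le> (\<Sum>j\<le>n. (2 / (real j + 1) ^ 2 + 2 / (real (n - j) + 1) ^ 2) / (real n + 1) ^ 2)"
    by (intro sum_mono) auto
  also have "\<dots> = ((\<Sum>j\<le>n. 2 / (real j + 1) ^ 2) + (\<Sum>j\<le>n. 2 / (real (n - j) + 1) ^ 2)) / (real n + 1) ^ 2"
    by (simp only: sum.distrib[symmetric] sum_divide_distrib)
  also have "(\<Sum>j\<le>n. 2 / (real (n - j) + 1) ^ 2) = (\<Sum>j\<le>n. 2 / (real j + 1) ^ 2)"
    by (rule sum.reindex_bij_witness[of _ "\<lambda>j. n - j" "\<lambda>j. n - j"]) auto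
  also have "(\<Sum>j\<le>n. 2 / (real j + 1) ^ 2) = 2 * (\<Sum>j\<le>n. 1 / (real j + 1) ^ 2)"
    by (simp add: sum_distrib_left)
  also have "(2 * (\<Sum>j\<le>n. 1 / (real j + 1) ^ 2) + 2 * (\<Sum>j\<le>n. 1 / (real j + 1) ^ 2)) / (real n + 1) ^ 2
      \<le> (2 * 2 + 2 * 2) / (real n + 1) ^ 2"
    by (intro divide_right_mono add_mono mult_left_mono order_trans[OF sum_inverse_squares_le]) simp_all
  finally show ?thesis
    by simp
qed

lemma majorizes_tail:
  fixes x :: "'a list \<Rightarrow> 'k::real_normed_field"
  assumes K: "majorizes (fps_const K * fps_geometric M) x" and "0 < M" "4 * M \<le> m"
  shows "majorizes (fps_const (K / 2 ^ L) * fps_geometric m) (\<lambda>\<eta>. 2 ^ L * (if L \<le> length \<eta> then x \<eta> else 0))"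
  unfolding majorizes_def
proof
  fix \<eta> :: "'a list"
  define n where "n = length \<eta>"
  have "0 \<le> K"
    using K by (rule majorizes_geometric_imp_nonneg)
  show "norm (2 ^ L * (if L \<le> length \<eta> then x \<eta> else 0)) \<le>
      fact (length \<eta>) * fps_nth (fps_const (K / 2 ^ L) * fps_geometric m) (length \<eta>)"
  proof (cases "L \<le> n")
    case True
    have "2 ^ L * 2 ^ L * M ^ n = (4::real) ^ L * M ^ n"
      by (simp flip: power_mult_distrib)
    also have "\<dots> \<le> 4 ^ n * M ^ n"
      using True \<open>0 < M\<close> by (intro mult_right_mono power_increasing) auto
    also have "\<dots> = (4 * M) ^ n"
      by (simp add: power_mult_distrib)
    also have "\<dots> \<le> m ^ n"
      using assms(2,3) by (intro power_mono) auto
    finally have "K / 2 ^ L * (2 ^ L * 2 ^ L * M ^ n) \<le> K / 2 ^ L * m ^ n"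
      using \<open>0 \<le> K\<close> by (intro mult_left_mono) auto
    then have bound: "2 ^ L * (K * M ^ n) \<le> K / 2 ^ L * m ^ n"
      by (simp add: field_simps)
    have "2 ^ L * norm (x \<eta>) \<le> 2 ^ L * (fact n * (K * M ^ n))"
      using majorizesD[OF K, of \<eta>] by (simp add: n_def)
    also have "\<dots> = fact n * (2 ^ L * (K * M ^ n))"
      by (simp add: ac_simps)
    also have "\<dots> \<le> fact n * (K / 2 ^ L * m ^ n)"
      using bound by (intro mult_left_mono) auto
    finally show ?thesis
      using True by (simp add: n_def norm_mult norm_power)
  qed (use \<open>0 \<le> K\<close> \<open>0 < M\<close> assms(3) in \<open>simp add: n_def\<close>)
qed

text \<open>If a zero neighbourhood contains the balls of radius \<open>4 e\<^sub>m\<close> in \<open>\<ell>\<^sub>\<infinity>\<^sub>,\<^sub>m\<close>, the maximum of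
  \<open>e\<^sub>m (m/2)\<^sup>n\<close> over \<open>m \<le> n + 1\<close> is attained at a radius that puts the degree-\<open>n\<close> piece into such
  a ball. For antitone \<open>e\<close> this envelope is supermultiplicative, and since \<open>1 / (n + 1)\<^sup>2\<close> is its
  own convolution square up to the factor \<open>8\<close>, the damped envelope satisfies \<open>V * V \<le> 8 e\<^sub>1 V\<close>.\<close>

definition envelope :: "(nat \<Rightarrow> real) \<Rightarrow> nat \<Rightarrow> real" where
  "envelope e n = Max ((\<lambda>m. e m * (real m / 2) ^ n) ` {1..n + 1})"

definition envelope_weight :: "(nat \<Rightarrow> real) \<Rightarrow> real fps" where
  "envelope_weight e = Abs_fps (\<lambda>n. envelope e n / (real n + 1) ^ 2)"

lemma envelope_attained: "\<exists>m\<in>{1..n + 1}. envelope e n = e m * (real m / 2) ^ n"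
proof -
  have "envelope e n \<in> (\<lambda>m. e m * (real m / 2) ^ n) ` {1..n + 1}"
    unfolding envelope_def by (rule Max_in) auto
  then show ?thesis
    by auto
qed

lemma envelope_ge: "m \<in> {1..n + 1} \<Longrightarrow> e m * (real m / 2) ^ n \<le> envelope e n"
  unfolding envelope_def by (rule Max_ge) auto

locale radius_sequence =
  fixes e :: "nat \<Rightarrow> real"
  assumes pos: "\<And>m. 1 \<le> m \<Longrightarrow> 0 < e m"
    and antitone: "\<And>m m'. 1 \<le> m \<Longrightarrow> m \<le> m' \<Longrightarrow> e m' \<le> e m"
begin

lemma envelope_pos: "0 < envelope e n"
proof -
  have "0 < e 1 * (real 1 / 2) ^ n"
    using pos[of 1] by simp
  also have "\<dots> \<le> envelope e n"
    by (rule envelope_ge) auto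
  finally show ?thesis .
qed

lemma fps_nth_envelope_weight_pos: "0 < fps_nth (envelope_weight e) n"
  using envelope_pos by (simp add: envelope_weight_def)

lemma envelope_term_mult_le:
  assumes "1 \<le> m'" "m' \<le> m" "m \<le> j + 1"
  shows "(e m * (real m / 2) ^ j) * (e m' * (real m' / 2) ^ k) \<le> e 1 * envelope e (j + k)"
proof -
  have "(e m * (real m / 2) ^ j) * (e m' * (real m' / 2) ^ k) \<le> (e m * (real m / 2) ^ j) * (e 1 * (real m / 2) ^ k)"
    using assms pos[of 1] pos[of m] antitone[of 1 m'] by (intro mult_left_mono mult_mono power_mono) auto
  also have "\<dots> = e 1 * (e m * (real m / 2) ^ (j + k))"
    by (simp add: power_add)
  also have "\<dots> \<le> e 1 * envelope e (j + k)"
    using assms pos[of 1] by (intro mult_left_mono envelope_ge) auto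
  finally show ?thesis .
qed

lemma envelope_mult_le: "envelope e j * envelope e k \<le> e 1 * envelope e (j + k)"
proof -
  obtain m m' where m: "m \<in> {1..j + 1}" "envelope e j = e m * (real m / 2) ^ j"
    and m': "m' \<in> {1..k + 1}" "envelope e k = e m' * (real m' / 2) ^ k"
    using envelope_attained by meson
  show ?thesis
  proof (cases "m' \<le> m")
    case True
    then show ?thesis
      using envelope_term_mult_le[of m' m j k] m m' by simp
  next
    case False
    then show ?thesis
      using envelope_term_mult_le[of m m' k j] m m' by (simp add: mult.commute add.commute)
  qed
qed

lemma envelope_weight_conv:
  "fps_le (envelope_weight e * envelope_weight e) (fps_const (8 * e 1) * envelope_weight e)"
  unfolding fps_le_def
proof
  fix n
  have "fps_nth (envelope_weight e * envelope_weight e) n =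
      (\<Sum>j\<le>n. (envelope e j * envelope e (n - j)) * (1 / ((real j + 1) ^ 2 * (real (n - j) + 1) ^ 2)))"
    by (simp add: envelope_weight_def fps_mult_nth atLeast0AtMost)
  also have "\<dots> \<le> (\<Sum>j\<le>n. (e 1 * envelope e n) * (1 / ((real j + 1) ^ 2 * (real (n - j) + 1) ^ 2)))"
  proof (intro sum_mono mult_right_mono)
    fix j assume "j \<in> {..n}"
    then show "envelope e j * envelope e (n - j) \<le> e 1 * envelope e n"
      using envelope_mult_le[of j "n - j"] by simp
  qed simp
  also have "\<dots> = (e 1 * envelope e n) * (\<Sum>j\<le>n. 1 / ((real j + 1) ^ 2 * (real (n - j) + 1) ^ 2))"
    by (simp add: sum_distrib_left)
  also have "\<dots> \<le> (e 1 * envelope e n) * (8 / (real n + 1) ^ 2)"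
    using pos[of 1] envelope_pos[of n] by (intro mult_left_mono sum_inverse_square_products_le) auto
  also have "\<dots> = fps_nth (fps_const (8 * e 1) * envelope_weight e) n"
    by (simp add: envelope_weight_def)
  finally show "fps_nth (envelope_weight e * envelope_weight e) n \<le> fps_nth (fps_const (8 * e 1) * envelope_weight e) n" .
qed

lemma envelope_weight_dominates_geometric: "dominates_geometric (envelope_weight e)"
proof (rule dominates_geometricI[OF fps_nth_envelope_weight_pos])
  fix L :: real assume "0 < L"
  define m where "m = nat \<lceil>8 * L\<rceil> + 1"
  have m: "1 \<le> m" "8 * L \<le> real m"
    unfolding m_def by linarith+
  have "e m * L ^ n \<le> fps_nth (envelope_weight e) n" if "m \<le> n + 1" for n
  proof -
    have "real (Suc n) \<le> real (2 ^ n)"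
      using less_exp[of n] by (simp only: of_nat_le_iff Suc_le_eq)
    then have "(real n + 1) ^ 2 \<le> (2 ^ n) ^ 2"
      by (intro power_mono) auto
    also have "(2 ^ n) ^ 2 = (4 :: real) ^ n"
      by (simp add: power2_eq_square flip: power_mult_distrib)
    finally have "e m * L ^ n * (real n + 1) ^ 2 \<le> e m * L ^ n * 4 ^ n"
      using pos[OF m(1)] \<open>0 < L\<close> by (intro mult_left_mono) auto
    also have "\<dots> = e m * (4 * L) ^ n"
      by (simp add: power_mult_distrib)
    also have "\<dots> \<le> e m * (real m / 2) ^ n"
      using m pos[OF m(1)] \<open>0 < L\<close> by (intro mult_left_mono power_mono) auto
    also have "\<dots> \<le> envelope e n"
      using that m by (intro envelope_ge) auto
    finally show ?thesis
      by (simp add: envelope_weight_def le_divide_eq)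
  qed
  then show "\<exists>r>0. \<exists>N. \<forall>n\<ge>N. r * L ^ n \<le> fps_nth (envelope_weight e) n"
    using pos[OF m(1)] by (intro exI[of _ "e m"] exI[of _ m] conjI allI impI) auto
qed


lemma majorizes_homogeneous_piece:
  fixes x :: "'a list \<Rightarrow> 'k::real_normed_field"
  assumes x: "majorizes (envelope_weight e) x"
  obtains m where "m \<in> {1..j + 1}"
    "majorizes (fps_const (2 * e m) * fps_geometric (real m)) (\<lambda>\<eta>. 2 ^ Suc j * (if length \<eta> = j then x \<eta> else 0))"
proof -
  obtain m where m: "m \<in> {1..j + 1}" "envelope e j = e m * (real m / 2) ^ j"
    using envelope_attained by blast
  have "majorizes (fps_const (2 * e m) * fps_geometric (real m)) (\<lambda>\<eta>. 2 ^ Suc j * (if length \<eta> = j then x \<eta> else 0))"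
    unfolding majorizes_def
  proof
    fix \<eta> :: "'a list"
    show "norm (2 ^ Suc j * (if length \<eta> = j then x \<eta> else 0)) \<le>
        fact (length \<eta>) * fps_nth (fps_const (2 * e m) * fps_geometric (real m)) (length \<eta>)"
    proof (cases "length \<eta> = j")
      case True
      have "norm (x \<eta>) \<le> fact j * (envelope e j / (real j + 1) ^ 2)"
        using majorizesD[OF x, of \<eta>] True by (simp add: envelope_weight_def)
      also have "\<dots> \<le> fact j * envelope e j"
        using envelope_pos[of j] by (intro mult_left_mono) (auto simp: field_simps)
      finally have "2 ^ Suc j * norm (x \<eta>) \<le> 2 ^ Suc j * (fact j * (e m * (real m / 2) ^ j))"
        using m(2) by simp
      then show ?thesis
        using True by (simp add: norm_mult norm_power power_divide)
    qed (use pos[of m] m in simp)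
  qed
  then show ?thesis
    using that m(1) by blast
qed

lemma weighted_ball_envelope_subset:
  fixes U :: "('a list \<Rightarrow> 'k::real_normed_field) set"
  assumes U: "absconvex U"
    and balls: "\<And>m. 1 \<le> m \<Longrightarrow> {c \<in> ell_inf (real m). ell_norm (real m) c < 4 * e m} \<subseteq> U"
  shows "weighted_ball (envelope_weight e) \<subseteq> U"
proof
  fix x :: "'a list \<Rightarrow> 'k" assume "x \<in> weighted_ball (envelope_weight e)"
  then have "x \<in> LC" and x: "majorizes (envelope_weight e) x"
    by (auto simp: weighted_ball_def)
  then obtain M K where "0 < M" and K: "majorizes (fps_const K * fps_geometric M) x"
    unfolding LC_iff_majorizes by blast
  define m where "m = nat \<lceil>4 * M\<rceil> + 1"
  have m: "1 \<le> m" "4 * M \<le> real m"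
    unfolding m_def by linarith+
  obtain L where "K / (4 * e m) < 2 ^ L"
    using real_arch_pow[of 2] by fastforce
  then have "K / 2 ^ L < 4 * e m"
    using pos[OF m(1)] by (simp add: field_simps)
  then have tail: "(\<lambda>\<eta>. 2 ^ L * (if L \<le> length \<eta> then x \<eta> else 0)) \<in> U"
    using majorizes_tail[OF K \<open>0 < M\<close> m(2)] m by (intro mem_if_ell_ball_subset[OF balls]) auto
  have pieces: "(\<lambda>\<eta>. 2 ^ Suc j * (if length \<eta> = j then x \<eta> else 0)) \<in> U" for j
  proof -
    obtain m' where "m' \<in> {1..j + 1}"
      and "majorizes (fps_const (2 * e m') * fps_geometric (real m')) (\<lambda>\<eta>. 2 ^ Suc j * (if length \<eta> = j then x \<eta> else 0))"
      using majorizes_homogeneous_piece[OF x] by blast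
    then show ?thesis
      using pos[of m'] by (intro mem_if_ell_ball_subset[OF balls]) auto
  qed
  show "x \<in> U"
    by (rule absconvex_mem_if_graded_pieces[OF U pieces tail])
qed

end

lemma silva_zero_nbhd_obtains_weighted_ball:
  fixes U :: "('a list \<Rightarrow> 'k::real_normed_field) set"
  assumes U: "silva_zero_nbhd U"
  obtains V C where "dominates_geometric V" "0 < C" "fps_le (V * V) (fps_const C * V)"
    "weighted_ball V \<subseteq> U"
proof -
  have "\<forall>m. \<exists>\<epsilon>. 1 \<le> m \<longrightarrow> 0 < \<epsilon> \<and> {c \<in> ell_inf (real m). ell_norm (real m) c < \<epsilon>} \<subseteq> U"
    using U unfolding silva_zero_nbhd_def by auto
  then obtain \<epsilon> where \<epsilon>: "\<And>m. 1 \<le> m \<Longrightarrow> 0 < \<epsilon> m \<and> {c \<in> ell_inf (real m). ell_norm (real m) c < \<epsilon> m} \<subseteq> U"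
    by metis
  define e where "e m = Min (\<epsilon> ` {1..m}) / 4" for m
  interpret radius_sequence e
  proof
    show "0 < e m" if "1 \<le> m" for m
      unfolding e_def using that \<epsilon> by (subst zero_less_divide_iff, subst Min_gr_iff) auto
    show "e m' \<le> e m" if "1 \<le> m" "m \<le> m'" for m m'
      unfolding e_def using that by (intro divide_right_mono Min_antimono) auto
  qed
  have balls: "{c \<in> ell_inf (real m). ell_norm (real m) c < 4 * e m} \<subseteq> U" if "1 \<le> m" for m
  proof
    fix c :: "'a list \<Rightarrow> 'k" assume c: "c \<in> {c \<in> ell_inf (real m). ell_norm (real m) c < 4 * e m}"
    have "4 * e m \<le> \<epsilon> m"
      unfolding e_def using that by simp
    then show "c \<in> U"
      using \<epsilon>[OF that] c by auto
  qed
  have "absconvex U"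
    using U by (simp add: silva_zero_nbhd_def)
  then have "weighted_ball (envelope_weight e) \<subseteq> U"
    using balls by (rule weighted_ball_envelope_subset)
  then show ?thesis
    using pos[of 1] by (intro that[OF envelope_weight_dominates_geometric _ envelope_weight_conv]) auto
qed

section \<open>The shuffle inverse\<close>

lemma LC_units_majorizes:
  assumes "c \<in> LC_units"
  obtains K M where "0 < K" "0 < M" "majorizes (fps_const K * fps_geometric M) c"
proof -
  obtain K M where "0 < M" and K: "majorizes (fps_const K * fps_geometric M) c"
    using assms unfolding LC_units_def LC_iff_majorizes by blast
  moreover have "0 < K"
    using majorizesD[OF K, of "[]"] assms by (simp add: LC_units_def) (meson less_le_trans zero_less_norm_iff)
  ultimately show ?thesis
    using that by blast
qed

lemma cprime_Nil: "c [] \<noteq> 0 \<Longrightarrow> cprime c [] = 0"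
  by (simp add: cprime_def one_ser_def)

lemma cprime_Cons: "cprime c (a # \<eta>) = - (c (a # \<eta>) / c [])"
  by (simp add: cprime_def one_ser_def)

lemma majorizes_cprime:
  assumes "majorizes (fps_const K * fps_geometric M) c" "c [] \<noteq> 0"
  shows "majorizes (fps_const (K / norm (c [])) * (fps_geometric M - 1)) (cprime c)"
  unfolding majorizes_def
proof
  fix \<eta> :: "'a list"
  show "norm (cprime c \<eta>) \<le> fact (length \<eta>) * fps_nth (fps_const (K / norm (c [])) * (fps_geometric M - 1)) (length \<eta>)"
  proof (cases \<eta>)
    case (Cons a \<eta>')
    then show ?thesis
      using majorizesD[OF assms(1), of \<eta>] assms(2)
      by (simp add: cprime_Cons norm_divide divide_right_mono mult.left_commute)
  qed (simp add: cprime_Nil assms(2))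
qed

lemma cprime_neumann_majorant:
  assumes "c \<in> LC_units"
  obtains A B where "majorizes A (cprime c)" "fps_nth A 0 = 0" "0 < B"
    "\<And>N. fps_le (\<Sum>k\<le>N. A ^ k) (fps_geometric B)"
proof -
  obtain K M where "0 < K" "0 < M" and c: "majorizes (fps_const K * fps_geometric M) c"
    using LC_units_majorizes[OF assms] .
  moreover have "c [] \<noteq> 0"
    using assms by (simp add: LC_units_def)
  ultimately show ?thesis
    using that[OF majorizes_cprime _ _ fps_le_neumann_geometric]
    by (simp add: zero_less_mult_iff add_pos_pos)
qed

lemma shuffle_inv_eq_neumann_sum:
  "shuffle_inv c \<eta> = inverse (c []) * neumann_sum (cprime c) (length \<eta>) \<eta>"
  by (simp add: shuffle_inv_def neumann_sum_def)

lemma shuffle_inv_LC_units: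
  assumes "c \<in> LC_units"
  shows "shuffle_inv c \<in> LC_units"
proof -
  obtain A B where A: "majorizes A (cprime c)" and "0 < B"
    and G: "\<And>N. fps_le (\<Sum>k\<le>N. A ^ k) (fps_geometric B)"
    using cprime_neumann_majorant[OF assms] by blast
  have "majorizes (fps_const (norm (inverse (c []))) * fps_geometric B) (shuffle_inv c)"
    unfolding majorizes_def
  proof
    fix \<eta> :: "'a list"
    have "majorizes (fps_const (norm (inverse (c []))) * fps_geometric B)
        (\<lambda>\<xi>. inverse (c []) * neumann_sum (cprime c) (length \<eta>) \<xi>)"
      using majorizes_mono[OF majorizes_neumann_sum[OF A] G] by (rule majorizes_const_mult)
    then show "norm (shuffle_inv c \<eta>) \<le> fact (length \<eta>) *
        fps_nth (fps_const (norm (inverse (c []))) * fps_geometric B) (length \<eta>)"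
      unfolding shuffle_inv_eq_neumann_sum by (rule majorizesD)
  qed
  then have "shuffle_inv c \<in> LC"
    unfolding LC_iff_majorizes using \<open>0 < B\<close> by blast
  moreover have "shuffle_inv c [] \<noteq> 0"
    using assms by (simp add: LC_units_def shuffle_inv_def one_ser_def)
  ultimately show ?thesis
    by (simp add: LC_units_def)
qed

lemma majorizes_diff_if_eq_below:
  fixes f g :: "'a list \<Rightarrow> 'k::real_normed_field"
  assumes "\<And>\<eta>. length \<eta> < n \<Longrightarrow> f \<eta> = g \<eta>"
    and "majorizes (fps_geometric B) f" "majorizes (fps_geometric B) g" "0 \<le> B"
  shows "majorizes (fps_const (2 / 2 ^ n) * fps_geometric (2 * B)) (\<lambda>\<eta>. f \<eta> - g \<eta>)"
  unfolding majorizes_def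
proof
  fix \<eta> :: "'a list"
  define m where "m = length \<eta>"
  show "norm (f \<eta> - g \<eta>) \<le> fact m * fps_nth (fps_const (2 / 2 ^ n) * fps_geometric (2 * B)) m"
  proof (cases "m < n")
    case False
    have "norm (f \<eta> - g \<eta>) \<le> 2 * (fact m * B ^ m)"
      using norm_triangle_ineq4[of "f \<eta>" "g \<eta>"] assms(2,3)[THEN majorizesD, of \<eta>] by (simp add: m_def)
    also have "\<dots> = 2 / 2 ^ m * (fact m * (2 * B) ^ m)"
      by (simp add: power_mult_distrib)
    also have "\<dots> \<le> 2 / 2 ^ n * (fact m * (2 * B) ^ m)"
      using False assms(4) by (intro mult_right_mono divide_left_mono power_increasing) auto
    finally show ?thesis
      by (simp add: mult.left_commute)
  qed (use assms(1,4) in \<open>simp add: m_def\<close>)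
qed

lemma limitin_neumann_partial_sums:
  assumes "c \<in> LC_units"
  shows "limitin silva_topology (\<lambda>n \<eta>. \<Sum>k<n. shuffle_pow (cprime c) k \<eta>)
    (\<lambda>\<eta>. \<Sum>k\<le>length \<eta>. shuffle_pow (cprime c) k \<eta>) sequentially"
proof -
  obtain A B where A: "majorizes A (cprime c)" "fps_nth A 0 = 0" and "0 < B"
    and G: "\<And>N. fps_le (\<Sum>k\<le>N. A ^ k) (fps_geometric B)"
    using cprime_neumann_majorant[OF assms] by blast
  define S where "S = (\<lambda>n \<eta>. \<Sum>k<n. shuffle_pow (cprime c) k \<eta>)"
  define l where "l = (\<lambda>\<eta>. \<Sum>k\<le>length \<eta>. shuffle_pow (cprime c) k \<eta>)"
  have bound: "norm (neumann_sum (cprime c) N \<eta>) \<le> fact (length \<eta>) * B ^ length \<eta>" for N \<eta>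
    using majorizesD[OF majorizes_mono[OF majorizes_neumann_sum[OF A(1)] G]] by simp
  have S: "majorizes (fps_geometric B) (S n)" for n
    using bound[of "n - 1"] \<open>0 < B\<close> unfolding majorizes_def
    by (cases n) (simp_all add: S_def neumann_sum_def lessThan_Suc_atMost)
  have l: "majorizes (fps_geometric B) l"
    using bound unfolding majorizes_def by (simp add: l_def neumann_sum_def)
  have "S n \<eta> = l \<eta>" if "length \<eta> < n" for n \<eta>
    unfolding S_def l_def using that shuffle_pow_eq_0[OF A] by (intro sum.mono_neutral_right) auto
  then have diff: "majorizes (fps_const (2 / 2 ^ n) * fps_geometric (2 * B)) (\<lambda>\<eta>. S n \<eta> - l \<eta>)" for n
    using S l \<open>0 < B\<close> by (intro majorizes_diff_if_eq_below) auto
  have "eventually (\<lambda>n. majorizes (fps_const \<epsilon> * fps_geometric (2 * B)) (\<lambda>\<eta>. S n \<eta> - l \<eta>)) sequentially"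
    if "0 < \<epsilon>" for \<epsilon>
  proof -
    obtain N where "2 / \<epsilon> < 2 ^ N"
      using real_arch_pow[of 2] by fastforce
    have small: "2 / 2 ^ n \<le> \<epsilon>" if "N \<le> n" for n
    proof -
      have "2 < \<epsilon> * 2 ^ N"
        using \<open>2 / \<epsilon> < 2 ^ N\<close> \<open>0 < \<epsilon>\<close> by (simp add: field_simps)
      also have "\<dots> \<le> \<epsilon> * 2 ^ n"
        using that \<open>0 < \<epsilon>\<close> by (intro mult_left_mono power_increasing) auto
      finally show ?thesis
        by (simp add: field_simps)
    qed
    have "fps_nonneg (fps_geometric (2 * B))"
      using \<open>0 < B\<close> by (simp add: fps_nonneg_def)
    then have "majorizes (fps_const \<epsilon> * fps_geometric (2 * B)) (\<lambda>\<eta>. S n \<eta> - l \<eta>)" if "N \<le> n" for n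
      using majorizes_mono[OF diff fps_le_const_mult_right[OF small[OF that]]] by blast
    then show ?thesis
      unfolding eventually_sequentially by blast
  qed
  moreover have "l \<in> LC"
    using l \<open>0 < B\<close> unfolding LC_iff_majorizes by (metis fps_const_1_eq_1 mult_1)
  ultimately show ?thesis
    unfolding S_def[symmetric] l_def[symmetric] using \<open>0 < B\<close>
    by (intro limitin_silva_topologyI[where M = "2 * B"]) auto
qed


section \<open>Continuity of the shuffle inverse\<close>

lemma norm_divide_diff_le:
  fixes p q u v :: "'k::real_normed_field"
  assumes "p \<noteq> 0" "norm p \<le> 2 * norm q"
  shows "norm (u / q - v / p) \<le> 2 * norm (u - v) / norm p + 2 * norm (q - p) * norm v / norm p ^ 2"
proof -
  have "q \<noteq> 0"
    using assms by auto
  then have q: "q \<noteq> 0" "1 / norm q \<le> 2 / norm p"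
    using assms by (auto simp: field_simps)
  have "u / q - v / p = (u - v) / q + v * (p - q) / (p * q)"
    using assms(1) q(1) by (simp add: field_simps)
  then have "norm (u / q - v / p) \<le> norm ((u - v) / q) + norm (v * (p - q) / (p * q))"
    by (simp only: norm_triangle_ineq)
  also have "\<dots> = norm (u - v) * (1 / norm q) + norm v * norm (q - p) / norm p * (1 / norm q)"
    by (simp add: norm_mult norm_divide norm_minus_commute)
  also have "\<dots> \<le> norm (u - v) * (2 / norm p) + norm v * norm (q - p) / norm p * (2 / norm p)"
    using q(2) by (intro add_mono mult_left_mono) auto
  finally show ?thesis
    by (simp add: power2_eq_square mult_ac)
qed


lemma majorizes_cprime_diff:
  fixes c w :: "'a list \<Rightarrow> 'k::real_normed_field"
  assumes F: "majorizes F c" and G: "majorizes G w"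
    and c0: "c [] \<noteq> 0" "norm (c []) \<le> 2 * norm (c [] + w [])"
  shows "majorizes (fps_const (2 / norm (c [])) * G + fps_const (2 * fps_nth G 0 / norm (c []) ^ 2) * F)
    (\<lambda>\<eta>. cprime (\<lambda>\<eta>. c \<eta> + w \<eta>) \<eta> - cprime c \<eta>)"
  unfolding majorizes_def
proof
  fix \<eta> :: "'a list"
  let ?n = "length \<eta>"
  have nonneg: "0 \<le> fps_nth F ?n" "0 \<le> fps_nth G ?n" "0 \<le> fps_nth G 0"
    using majorizes_imp_fps_nonneg[OF F] majorizes_imp_fps_nonneg[OF G] by (auto simp: fps_nonneg_def)
  show "norm (cprime (\<lambda>\<eta>. c \<eta> + w \<eta>) \<eta> - cprime c \<eta>) \<le> fact ?n *
      fps_nth (fps_const (2 / norm (c [])) * G + fps_const (2 * fps_nth G 0 / norm (c []) ^ 2) * F) ?n"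
  proof (cases \<eta>)
    case Nil
    have "c [] + w [] \<noteq> 0"
      using c0 by auto
    then show ?thesis
      using Nil c0 nonneg by (simp add: cprime_Nil)
  next
    case (Cons a \<eta>')
    have "norm (cprime (\<lambda>\<eta>. c \<eta> + w \<eta>) \<eta> - cprime c \<eta>) = norm ((c \<eta> + w \<eta>) / (c [] + w []) - c \<eta> / c [])"
      by (simp add: Cons cprime_Cons norm_minus_commute)
    also have "\<dots> \<le> 2 * norm (w \<eta>) / norm (c []) + 2 * norm (w []) * norm (c \<eta>) / norm (c []) ^ 2"
      using norm_divide_diff_le[OF c0, of "c \<eta> + w \<eta>" "c \<eta>"] by simp
    also have "\<dots> \<le> 2 * (fact ?n * fps_nth G ?n) / norm (c []) + 2 * fps_nth G 0 * (fact ?n * fps_nth F ?n) / norm (c []) ^ 2"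
      using majorizesD[OF G, of \<eta>] majorizesD[OF G, of "[]"] majorizesD[OF F, of \<eta>] nonneg
      by (intro add_mono divide_right_mono mult_left_mono mult_mono) auto
    also have "\<dots> = fact ?n *
        fps_nth (fps_const (2 / norm (c [])) * G + fps_const (2 * fps_nth G 0 / norm (c []) ^ 2) * F) ?n"
      by (simp add: field_simps)
    finally show ?thesis .
  qed
qed

lemma majorizes_shuffle_inv_diff:
  fixes a c :: "'a list \<Rightarrow> 'k::real_normed_field"
  assumes D: "\<And>N. majorizes D (\<lambda>\<eta>. neumann_sum (cprime a) N \<eta> - neumann_sum (cprime c) N \<eta>)"
    and Y: "\<And>N. majorizes Y (neumann_sum (cprime c) N)"
    and c0: "c [] \<noteq> 0" "norm (c []) \<le> 2 * norm (a [])"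
  shows "majorizes (fps_const (2 / norm (c [])) * D + fps_const (2 * norm (a [] - c []) / norm (c []) ^ 2) * Y)
    (\<lambda>\<eta>. shuffle_inv a \<eta> - shuffle_inv c \<eta>)"
  unfolding majorizes_def
proof
  fix \<eta> :: "'a list"
  let ?n = "length \<eta>" and ?X = "neumann_sum (cprime a) (length \<eta>) \<eta>"
    and ?Y = "neumann_sum (cprime c) (length \<eta>) \<eta>"
  have "norm (shuffle_inv a \<eta> - shuffle_inv c \<eta>) = norm (?X / a [] - ?Y / c [])"
    by (simp add: shuffle_inv_eq_neumann_sum field_simps)
  also have "\<dots> \<le> 2 * norm (?X - ?Y) / norm (c []) + 2 * norm (a [] - c []) * norm ?Y / norm (c []) ^ 2"
    by (rule norm_divide_diff_le[OF c0])
  also have "\<dots> \<le> 2 * (fact ?n * fps_nth D ?n) / norm (c []) + 2 * norm (a [] - c []) * (fact ?n * fps_nth Y ?n) / norm (c []) ^ 2"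
    using majorizesD[OF D] majorizesD[OF Y] by (intro add_mono divide_right_mono mult_left_mono) auto
  also have "\<dots> = fact ?n *
      fps_nth (fps_const (2 / norm (c [])) * D + fps_const (2 * norm (a [] - c []) / norm (c []) ^ 2) * Y) ?n"
    by (simp add: field_simps)
  finally show "norm (shuffle_inv a \<eta> - shuffle_inv c \<eta>) \<le> fact ?n *
      fps_nth (fps_const (2 / norm (c [])) * D + fps_const (2 * norm (a [] - c []) / norm (c []) ^ 2) * Y) ?n" .
qed


lemma LC_units_weight_bounds:
  assumes c: "c \<in> LC_units" and V: "dominates_geometric V"
  obtains A \<rho> \<sigma> where "majorizes A (cprime c)" "\<And>N. fps_le (\<Sum>k\<le>N. A ^ k) (fps_const \<rho> * V)"
    "majorizes (fps_const \<sigma> * V) c" "1 \<le> \<rho> * fps_nth V 0" "0 < \<rho>" "0 < \<sigma>"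
proof -
  obtain K M where "0 < K" "0 < M" and cK: "majorizes (fps_const K * fps_geometric M) c"
    using LC_units_majorizes[OF c] .
  obtain A B where A: "majorizes A (cprime c)" and "0 < B"
    and AB: "\<And>N. fps_le (\<Sum>k\<le>N. A ^ k) (fps_geometric B)"
    using cprime_neumann_majorant[OF c] by blast
  obtain r r' where "0 < r" "0 < r'" and r: "\<And>n. r * B ^ n \<le> fps_nth V n"
    and r': "\<And>n. r' * M ^ n \<le> fps_nth V n"
    using V \<open>0 < B\<close> \<open>0 < M\<close> unfolding dominates_geometric_def by meson
  have "fps_le (fps_geometric B) (fps_const (1 / r) * V)"
    using r \<open>0 < r\<close> by (simp add: fps_le_def field_simps)
  then have G: "fps_le (\<Sum>k\<le>N. A ^ k) (fps_const (1 / r) * V)" for N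
    by (rule fps_le_trans[OF AB])
  have "fps_le (fps_const K * fps_geometric M) (fps_const (K / r') * V)"
    using r' \<open>0 < r'\<close> \<open>0 < K\<close> by (simp add: fps_le_def field_simps mult_left_mono)
  then have c: "majorizes (fps_const (K / r') * V) c"
    by (rule majorizes_mono[OF cK])
  have "1 \<le> 1 / r * fps_nth V 0"
    using r[of 0] \<open>0 < r\<close> by (simp add: field_simps)
  then show ?thesis
    by (rule that[OF A G c]) (use \<open>0 < K\<close> \<open>0 < r\<close> \<open>0 < r'\<close> in simp_all)
qed

lemma majorizes_shuffle_inv_perturbation:
  fixes c w :: "'a list \<Rightarrow> 'k::real_normed_field"
  assumes A: "majorizes A (cprime c)" "\<And>N. fps_le (\<Sum>k\<le>N. A ^ k) (fps_const \<rho> * V)"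
    and c: "majorizes (fps_const \<sigma> * V) c" "c [] \<noteq> 0" "norm (c []) \<le> 2 * norm (c [] + w [])"
    and w: "majorizes (fps_const \<epsilon> * V) w" "0 \<le> \<epsilon>"
    and V: "fps_nonneg V" "fps_le (V * V) (fps_const C * V)" "0 \<le> C" "1 \<le> \<rho> * fps_nth V 0" "0 < \<rho>"
  defines "nc \<equiv> norm (c [])" and "g \<equiv> 2 / norm (c []) + 2 * fps_nth V 0 * \<sigma> / norm (c []) ^ 2"
  assumes small: "2 * \<rho> * (\<epsilon> * g) * C ^ 2 \<le> 1"
  shows "majorizes (fps_const (\<epsilon> * (4 * \<rho> ^ 2 * g * C ^ 2 / nc + 2 * fps_nth V 0 * \<rho> / nc ^ 2)) * V)
    (\<lambda>\<eta>. shuffle_inv (\<lambda>\<eta>. c \<eta> + w \<eta>) \<eta> - shuffle_inv c \<eta>)"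
proof -
  have "0 \<le> fps_nth V 0"
    using V(1) by (simp add: fps_nonneg_def)
  then have "0 < fps_nth V 0"
    using V(4) by (auto simp: less_le)
  moreover have "0 \<le> \<sigma> * fps_nth V 0"
    using majorizes_imp_fps_nonneg[OF c(1)] by (simp add: fps_nonneg_def)
  ultimately have "0 \<le> g"
    by (simp add: g_def zero_le_mult_iff)
  have "0 < nc"
    using c(2) by (simp add: nc_def)
  have w0: "norm (w []) \<le> \<epsilon> * fps_nth V 0"
    using majorizesD[OF w(1), of "[]"] by simp
  have "fps_const (2 / nc) * (fps_const \<epsilon> * V) + fps_const (2 * fps_nth (fps_const \<epsilon> * V) 0 / nc ^ 2) * (fps_const \<sigma> * V)
      = fps_const (\<epsilon> * g) * V"
    by (simp add: fps_eq_iff g_def nc_def algebra_simps)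
  then have \<Gamma>: "majorizes (fps_const (\<epsilon> * g) * V) (\<lambda>\<eta>. cprime (\<lambda>\<eta>. c \<eta> + w \<eta>) \<eta> - cprime c \<eta>)"
    using majorizes_cprime_diff[OF c(1) w(1) c(2,3)] by (simp add: nc_def)
  have D: "majorizes (fps_const (2 * \<rho> ^ 2 * (\<epsilon> * g) * C ^ 2) * V)
      (\<lambda>\<eta>. neumann_sum (cprime (\<lambda>\<eta>. c \<eta> + w \<eta>)) N \<eta> - neumann_sum (cprime c) N \<eta>)" for N
    using small w(2) \<open>0 \<le> g\<close> by (intro majorizes_neumann_sum_diff_weight[OF A \<Gamma> _ V]) simp_all
  have Y: "majorizes (fps_const \<rho> * V) (neumann_sum (cprime c) N)" for N
    by (rule majorizes_mono[OF majorizes_neumann_sum[OF A(1)] A(2)])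
  have "majorizes (fps_const (2 / nc) * (fps_const (2 * \<rho> ^ 2 * (\<epsilon> * g) * C ^ 2) * V) +
      fps_const (2 * norm (w []) / nc ^ 2) * (fps_const \<rho> * V))
      (\<lambda>\<eta>. shuffle_inv (\<lambda>\<eta>. c \<eta> + w \<eta>) \<eta> - shuffle_inv c \<eta>)"
    using majorizes_shuffle_inv_diff[OF D Y c(2)] c(3) by (simp add: nc_def)
  moreover have "2 * norm (w []) / nc ^ 2 * \<rho> \<le> 2 * (\<epsilon> * fps_nth V 0) / nc ^ 2 * \<rho>"
    using w0 V(5) by (intro mult_right_mono divide_right_mono) auto
  then have "(2 / nc * (2 * \<rho> ^ 2 * (\<epsilon> * g) * C ^ 2) + 2 * norm (w []) / nc ^ 2 * \<rho>) * fps_nth V n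
      \<le> \<epsilon> * (4 * \<rho> ^ 2 * g * C ^ 2 / nc + 2 * fps_nth V 0 * \<rho> / nc ^ 2) * fps_nth V n" for n
    using V(1) unfolding fps_nonneg_def by (intro mult_right_mono) (simp_all add: algebra_simps)
  then have "fps_le (fps_const (2 / nc) * (fps_const (2 * \<rho> ^ 2 * (\<epsilon> * g) * C ^ 2) * V) +
      fps_const (2 * norm (w []) / nc ^ 2) * (fps_const \<rho> * V))
      (fps_const (\<epsilon> * (4 * \<rho> ^ 2 * g * C ^ 2 / nc + 2 * fps_nth V 0 * \<rho> / nc ^ 2)) * V)"
    by (simp add: fps_le_def algebra_simps)
  ultimately show ?thesis
    by (rule majorizes_mono)
qed

lemma shuffle_inv_perturbation:
  fixes c :: "'a list \<Rightarrow> 'k::real_normed_field"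
  assumes c: "c \<in> LC_units"
    and V: "dominates_geometric V" "0 < C" "fps_le (V * V) (fps_const C * V)"
  obtains \<epsilon> where "0 < \<epsilon>"
    "\<And>w. majorizes (fps_const \<epsilon> * V) w \<Longrightarrow> norm (c []) \<le> 2 * norm (c [] + w []) \<and>
      majorizes V (\<lambda>\<eta>. shuffle_inv (\<lambda>\<eta>. c \<eta> + w \<eta>) \<eta> - shuffle_inv c \<eta>)"
proof -
  obtain A \<rho> \<sigma> where A: "majorizes A (cprime c)" "\<And>N. fps_le (\<Sum>k\<le>N. A ^ k) (fps_const \<rho> * V)"
    and c\<sigma>: "majorizes (fps_const \<sigma> * V) c" and \<rho>: "1 \<le> \<rho> * fps_nth V 0" "0 < \<rho>" and "0 < \<sigma>"
    using LC_units_weight_bounds[OF c V(1)] by blast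
  have V0: "0 < fps_nth V 0" and V_nonneg: "fps_nonneg V"
    using dominates_geometric_pos[OF V(1)] by (simp_all add: fps_nonneg_def less_imp_le)
  have c0: "c [] \<noteq> 0"
    using c by (simp add: LC_units_def)
  define nc g where "nc = norm (c [])" and "g = 2 / norm (c []) + 2 * fps_nth V 0 * \<sigma> / norm (c []) ^ 2"
  define q1 q2 q3 where "q1 = 2 * fps_nth V 0 / nc" and "q2 = 2 * \<rho> * g * C ^ 2"
    and "q3 = 4 * \<rho> ^ 2 * g * C ^ 2 / nc + 2 * fps_nth V 0 * \<rho> / nc ^ 2"
  \<comment> \<open>\<open>\<epsilon> q1 \<le> 1\<close> keeps \<open>(c + w) []\<close> away from \<open>0\<close>, \<open>\<epsilon> q2 \<le> 1\<close> lets the partial sums for \<open>c + w\<close>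
     stay below \<open>2 \<rho> V\<close>, and \<open>\<epsilon> q3 \<le> 1\<close> is the final bound.\<close>
  define \<epsilon> where "\<epsilon> = 1 / (1 + q1 + q2 + q3)"
  have "0 < nc"
    using c0 by (simp add: nc_def)
  then have "0 \<le> q1" "0 \<le> q2" "0 \<le> q3"
    using V0 \<rho>(2) \<open>0 < \<sigma>\<close> by (simp_all add: q1_def q2_def q3_def g_def nc_def)
  then have "0 < \<epsilon>" and small: "\<epsilon> * q1 \<le> 1" "\<epsilon> * q2 \<le> 1" "\<epsilon> * q3 \<le> 1"
    by (simp_all add: \<epsilon>_def)
  have "norm (c []) \<le> 2 * norm (c [] + w []) \<and>
      majorizes V (\<lambda>\<eta>. shuffle_inv (\<lambda>\<eta>. c \<eta> + w \<eta>) \<eta> - shuffle_inv c \<eta>)"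
    if w: "majorizes (fps_const \<epsilon> * V) w" for w
  proof
    have "norm (c []) \<le> norm (c [] + w []) + norm (w [])"
      by (metis add_diff_cancel_right' norm_triangle_ineq4)
    moreover have "norm (w []) \<le> \<epsilon> * fps_nth V 0"
      using majorizesD[OF w, of "[]"] by simp
    moreover have "\<epsilon> * fps_nth V 0 * 2 \<le> norm (c [])"
      using small(1) \<open>0 < nc\<close> by (simp add: q1_def nc_def field_simps)
    ultimately show a0: "norm (c []) \<le> 2 * norm (c [] + w [])"
      by linarith
    have "majorizes (fps_const (\<epsilon> * q3) * V) (\<lambda>\<eta>. shuffle_inv (\<lambda>\<eta>. c \<eta> + w \<eta>) \<eta> - shuffle_inv c \<eta>)"
      using majorizes_shuffle_inv_perturbation[OF A c\<sigma> c0 a0 w _ V_nonneg V(3) _ \<rho>(1,2)] small(2) V(2) \<open>0 < \<epsilon>\<close>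
      by (simp add: q2_def q3_def g_def nc_def mult_ac)
    then show "majorizes V (\<lambda>\<eta>. shuffle_inv (\<lambda>\<eta>. c \<eta> + w \<eta>) \<eta> - shuffle_inv c \<eta>)"
      using majorizes_mono fps_le_const_mult_right[OF small(3) V_nonneg] by fastforce
  qed
  then show ?thesis
    using that \<open>0 < \<epsilon>\<close> by blast
qed


lemma shuffle_inv_local_continuity:
  fixes c :: "'a list \<Rightarrow> 'k::real_normed_field"
  assumes c: "c \<in> LC_units" and U: "silva_zero_nbhd U"
  shows "\<exists>W. silva_zero_nbhd W \<and> (\<forall>w\<in>W. (\<lambda>\<eta>. c \<eta> + w \<eta>) \<in> LC_units \<and>
    (\<lambda>\<eta>. shuffle_inv (\<lambda>\<eta>. c \<eta> + w \<eta>) \<eta> - shuffle_inv c \<eta>) \<in> U)"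
proof -
  obtain V C where V: "dominates_geometric V" "0 < C" "fps_le (V * V) (fps_const C * V)"
    and VU: "weighted_ball V \<subseteq> U"
    using silva_zero_nbhd_obtains_weighted_ball[OF U] .
  obtain \<epsilon> where "0 < \<epsilon>" and \<epsilon>: "\<And>w. majorizes (fps_const \<epsilon> * V) w \<Longrightarrow>
      norm (c []) \<le> 2 * norm (c [] + w []) \<and>
      majorizes V (\<lambda>\<eta>. shuffle_inv (\<lambda>\<eta>. c \<eta> + w \<eta>) \<eta> - shuffle_inv c \<eta>)"
    using shuffle_inv_perturbation[OF c V] by blast
  have "(\<lambda>\<eta>. c \<eta> + w \<eta>) \<in> LC_units \<and> (\<lambda>\<eta>. shuffle_inv (\<lambda>\<eta>. c \<eta> + w \<eta>) \<eta> - shuffle_inv c \<eta>) \<in> U"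
    if w: "w \<in> weighted_ball (fps_const \<epsilon> * V)" for w
  proof
    have "c \<in> LC" "c [] \<noteq> 0" "w \<in> LC"
      using c w by (auto simp: LC_units_def weighted_ball_def)
    moreover have "norm (c []) \<le> 2 * norm (c [] + w [])"
      using \<epsilon> w by (simp add: weighted_ball_def)
    ultimately show cw: "(\<lambda>\<eta>. c \<eta> + w \<eta>) \<in> LC_units"
      by (auto simp: LC_units_def LC_add)
    have "(\<lambda>\<eta>. shuffle_inv (\<lambda>\<eta>. c \<eta> + w \<eta>) \<eta> - shuffle_inv c \<eta>) \<in> LC"
      using shuffle_inv_LC_units[OF cw] shuffle_inv_LC_units[OF c] by (intro LC_diff) (auto simp: LC_units_def)
    then show "(\<lambda>\<eta>. shuffle_inv (\<lambda>\<eta>. c \<eta> + w \<eta>) \<eta> - shuffle_inv c \<eta>) \<in> U"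
      using \<epsilon> w VU by (auto simp: weighted_ball_def)
  qed
  moreover have "silva_zero_nbhd (weighted_ball (fps_const \<epsilon> * V) :: ('a list \<Rightarrow> 'k) set)"
    by (intro silva_zero_nbhd_weighted_ball dominates_geometric_const_mult V(1) \<open>0 < \<epsilon>\<close>)
  ultimately show ?thesis
    by blast
qed

lemma continuous_map_shuffle_inv:
  "continuous_map (subtopology silva_topology (LC_units :: ('a list \<Rightarrow> 'k::real_normed_field) set))
    (subtopology silva_topology LC_units) shuffle_inv"
proof (rule continuous_map_silva_topologyI)
  show "LC_units \<subseteq> LC"
    by (auto simp: LC_units_def)
  then show "LC_units \<subseteq> LC" .
  show "shuffle_inv ` LC_units \<subseteq> LC_units"
    using shuffle_inv_LC_units by blast
qed (rule shuffle_inv_local_continuity)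

theorem proposition3p6:
  fixes dummy :: "'a::finite"
  shows
  "(\<forall>c\<in>(LC_units :: ('a list \<Rightarrow> real) set).
       limitin silva_topology (\<lambda>n \<eta>. \<Sum>k<n. shuffle_pow (cprime c) k \<eta>)
               (\<lambda>\<eta>. \<Sum>k\<le>length \<eta>. shuffle_pow (cprime c) k \<eta>) sequentially
     \<and> shuffle_inv c \<in> LC_units)
   \<and> continuous_map (subtopology silva_topology (LC_units :: ('a list \<Rightarrow> real) set))
                     (subtopology silva_topology LC_units) shuffle_inv
   \<and> (\<forall>c\<in>(LC_units :: ('a list \<Rightarrow> complex) set).
       limitin silva_topology (\<lambda>n \<eta>. \<Sum>k<n. shuffle_pow (cprime c) k \<eta>)
               (\<lambda>\<eta>. \<Sum>k\<le>length \<eta>. shuffle_pow (cprime c) k \<eta>) sequentially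
     \<and> shuffle_inv c \<in> LC_units)
   \<and> continuous_map (subtopology silva_topology (LC_units :: ('a list \<Rightarrow> complex) set))
                     (subtopology silva_topology LC_units) shuffle_inv"
  by (simp add: limitin_neumann_partial_sums shuffle_inv_LC_units continuous_map_shuffle_inv)

end
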